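(* Let $k,n\ge 1$ be integers, $m=kn-1$, and equip $\mathbb P_m\mathbb C$ with the metric $g$ and group $G_{n,k}$ described in the context (for some fixed constant $a_m>0$). Let $\varphi\in C^\infty(\mathbb P_m\mathbb C)$ be $g$-admissible and $G_{n,k}$-invariant, with $\sup_{\mathbb P_m\mathbb C}\varphi=0$. Then $\varphi\ge\psi$ on $\mathbb P_m\mathbb C$, where $$\psi([z_0,\dots,z_m])=\ln\frac{(|z_0|\cdots|z_m|)^{2a_m/(m+1)}}{(|z_0|^2+\cdots+|z_m|^2)^{a_m}}$$ (with $\psi=-\infty$ where some $z_p=0$).
   Context: Homogeneous coordinates on $\mathbb P_m\mathbb C$, $m=kn-1$, are written $[z_0,\dots,z_m]=[Z_0,\dots,Z_{k-1}]$ with blocks $Z_h=(z_{hn},\dots,z_{(h+1)n-1})\in\mathbb C^n$, $h=0,\dots,k-1$. The metric $g$ is $a_m$ times the Fubini–Study metric: in the chart $\{z_0\neq0\}$ (with $z_0=1$) its components are $g_{\lambda\bar\mu}=a_m\,\partial^2\ln(1+|z_1|^2+\cdots+|z_m|^2)/\partial z_\lambda\partial\bar z_\mu$, and similarly in the other standard charts. A function $\varphi\in C^\infty(\mathbb P_m\mathbb C)$ is $g$-admissible if the Hermitian matrix $g_{\lambda\bar\mu}+\partial^2\varphi/\partial z_\lambda\partial\bar z_\mu$ is positive definite everywhere (in local holomorphic coordinates). $G_{n,k}$ is the group of automorphisms of $\mathbb P_m\mathbb C$ generated by: the block swaps $[Z_0,\dots,Z_i,\dots,Z_j,\dots,Z_{k-1}]\mapsto[Z_0,\dots,Z_j,\dots,Z_i,\dots,Z_{k-1}]$;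 the phase rotations multiplying a single homogeneous coordinate $z_p$ by $e^{i\theta}$ ($\theta\in\mathbb R$); and the transpositions exchanging $z_p$ and $z_q$ whenever $z_p,z_q$ belong to the same block $Z_h$. The function $\psi$ is homogeneous of degree $0$, hence well defined on $\mathbb P_m\mathbb C$. *)

theory Defs
  imports "HOL-Analysis.Analysis"
begin

fun dd :: "'a::real_normed_vector list \<Rightarrow> ('a \<Rightarrow> 'b::real_normed_vector) \<Rightarrow> 'a \<Rightarrow> 'b" where
  "dd [] f = f"
| "dd (v # vs) f = (\<lambda>x. vector_derivative (\<lambda>t::real. dd vs f (x + t *\<^sub>R v)) (at 0))"

definition smooth_on :: "'a::euclidean_space set \<Rightarrow> ('a \<Rightarrow> 'b::real_normed_vector) \<Rightarrow> bool" where
  "smooth_on S f \<longleftrightarrow>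
     (\<forall>vs. set vs \<subseteq> Basis \<longrightarrow>
        continuous_on S (dd vs f) \<and>
        (\<forall>v\<in>Basis. \<forall>x\<in>S. (\<lambda>t::real. dd vs f (x + t *\<^sub>R v)) differentiable (at 0)))"

definition dz :: "'d::finite \<Rightarrow> (complex^'d \<Rightarrow> complex) \<Rightarrow> complex^'d \<Rightarrow> complex" where
  "dz p F = (\<lambda>z. (dd [axis p 1] F z - \<i> * dd [axis p \<i>] F z) / 2)"

definition dzbar :: "'d::finite \<Rightarrow> (complex^'d \<Rightarrow> complex) \<Rightarrow> complex^'d \<Rightarrow> complex" where
  "dzbar p F = (\<lambda>z. (dd [axis p 1] F z + \<i> * dd [axis p \<i>] F z) / 2)"

definition pos_def_herm :: "('d \<Rightarrow> 'd \<Rightarrow> complex) \<Rightarrow> 'd set \<Rightarrow> bool" where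
  "pos_def_herm H I \<longleftrightarrow>
     (\<forall>l\<in>I. \<forall>m\<in>I. H m l = cnj (H l m)) \<and>
     (\<forall>\<xi>::'d \<Rightarrow> complex. (\<forall>p. p \<notin> I \<longrightarrow> \<xi> p = 0) \<and> (\<exists>p\<in>I. \<xi> p \<noteq> 0) \<longrightarrow>
        0 < Re (\<Sum>l\<in>I. \<Sum>m\<in>I. H l m * \<xi> l * cnj (\<xi> m)))"

text \<open>Functions on P_m C are represented by their lifts Phi to C^(m+1) - {0},
  homogeneous of degree 0.  Coordinates are indexed by pairs (h, c), h the block
  index (CARD('b) = k blocks), c the position in the block (CARD('c) = n).\<close>
definition proj_fun :: "(complex^'d::finite \<Rightarrow> real) \<Rightarrow> bool" where
  "proj_fun \<Phi> \<longleftrightarrow> (\<forall>z c. z \<noteq> 0 \<longrightarrow> c \<noteq> 0 \<longrightarrow> \<Phi> (c *s z) = \<Phi> z)"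

text \<open>Fubini--Study potential in the standard chart {z_j = 1}.\<close>
definition fs_pot :: "'d::finite \<Rightarrow> complex^'d \<Rightarrow> complex" where
  "fs_pot j = (\<lambda>w. complex_of_real (ln (1 + (\<Sum>p\<in>-{j}. (cmod (w $ p))\<^sup>2))))"

text \<open>g-admissibility, g = a times Fubini--Study, tested in every standard chart
  {z_j = 1} with local coordinates z_l, l \<noteq> j.\<close>
definition admissible :: "real \<Rightarrow> (complex^'d::finite \<Rightarrow> real) \<Rightarrow> bool" where
  "admissible a \<Phi> \<longleftrightarrow>
     (\<forall>j z. z $ j = 1 \<longrightarrow>
        pos_def_herm
          (\<lambda>l m. of_real a * dz l (dzbar m (fs_pot j)) z
                 + dz l (dzbar m (\<lambda>w. complex_of_real (\<Phi> w))) z) (-{j}))"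

definition swp :: "'a \<Rightarrow> 'a \<Rightarrow> 'a \<Rightarrow> 'a" where
  "swp i j x = (if x = i then j else if x = j then i else x)"

text \<open>Invariance under the generators of G_{n,k}.\<close>
definition G_invariant :: "(complex^('b::finite \<times> 'c::finite) \<Rightarrow> real) \<Rightarrow> bool" where
  "G_invariant \<Phi> \<longleftrightarrow>
     (\<forall>i j z. \<Phi> (\<chi> q. z $ (swp i j (fst q), snd q)) = \<Phi> z) \<and>
     (\<forall>p \<theta> z. \<Phi> (\<chi> q. if q = p then cis \<theta> * z $ q else z $ q) = \<Phi> z) \<and>
     (\<forall>h c d z. \<Phi> (\<chi> q. if fst q = h then z $ (h, swp c d (snd q)) else z $ q) = \<Phi> z)"

definition psi :: "real \<Rightarrow> complex^'d::finite \<Rightarrow> real" where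
  "psi a z = ln ((\<Prod>p\<in>UNIV. cmod (z $ p)) powr (2 * a / real CARD('d))
                 / (\<Sum>p\<in>UNIV. (cmod (z $ p))\<^sup>2) powr a)"

end

theory Submission
  imports Defs
begin

text \<open>
  Write \<open>x\<^sub>p = ln |z\<^sub>p|\<^sup>2\<close>.  By invariance under the phase rotations, \<open>\<phi>\<close> is determined by its values
  at the points \<open>exp (x / 2)\<close> with positive real coordinates, where
  \<open>U x = a ln (\<Sum>\<^sub>p exp x\<^sub>p) + \<phi> (exp (x / 2))\<close> is the potential of \<open>g + dd\<^sup>c \<phi>\<close>.  The second
  derivative of \<open>U\<close> along a real line is \<open>4\<close> times the Levi form of \<open>g + dd\<^sup>c \<phi>\<close> on a real vector
  (the imaginary directions drop out by phase invariance), so admissibility makes \<open>U\<close> convex on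
  \<open>\<real>\<^sup>m\<^sup>+\<^sup>1\<close>; moreover \<open>U (x + c) = U x + a c\<close> for constants \<open>c\<close>.

  Averaging \<open>x\<close> by transpositions inside each block, and then, on blockwise constant vectors, by
  block swaps does not increase the convex function \<open>U\<close>, which is invariant under these
  permutations; hence \<open>U x \<ge> U \<mu> = U 0 + a \<mu>\<close> for the mean \<open>\<mu>\<close> of \<open>x\<close>.  On the other hand
  \<open>\<phi> \<le> 0\<close> bounds \<open>U\<close> from above as one coordinate tends to \<open>-\<infinity>\<close>, so the convex \<open>U\<close> is
  nondecreasing in each coordinate: \<open>\<phi> (exp (x / 2)) = U x - a ln (\<Sum>\<^sub>p exp x\<^sub>p) \<le> U (max x) - a max x = U 0\<close>,
  and \<open>sup \<phi> = 0\<close> gives \<open>U 0 \<ge> 0\<close>.  Together, \<open>\<phi> z \<ge> a \<mu> - a ln |z|\<^sup>2 = \<psi> z\<close>.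
\<close>

section \<open>Chain rule along coordinate curves\<close>

definition coord_curve :: "'d set \<Rightarrow> complex^'d::finite \<Rightarrow> ('d \<Rightarrow> real \<Rightarrow> real) \<Rightarrow> real \<Rightarrow> complex^'d" where
  "coord_curve P y0 \<sigma> t = (\<chi> p. if p \<in> P then complex_of_real (\<sigma> p t) else y0 $ p)"

lemma mvt_along_line:
  fixes f :: "'a::real_normed_vector \<Rightarrow> real"
  assumes deriv: "\<And>\<zeta>. \<bar>\<zeta>\<bar> \<le> \<bar>\<Delta>\<bar> \<Longrightarrow>
      ((\<lambda>s. f (c + \<zeta> *\<^sub>R u + s *\<^sub>R u)) has_real_derivative D (c + \<zeta> *\<^sub>R u)) (at 0)"
    and "\<Delta> \<noteq> 0"
  shows "\<exists>\<zeta>. \<bar>\<zeta>\<bar> < \<bar>\<Delta>\<bar> \<and> f (c + \<Delta> *\<^sub>R u) - f c = \<Delta> * D (c + \<zeta> *\<^sub>R u)"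
proof -
  define F where "F \<zeta> = f (c + \<zeta> *\<^sub>R u)" for \<zeta>
  have dF: "DERIV F \<zeta> :> D (c + \<zeta> *\<^sub>R u)" if "\<bar>\<zeta>\<bar> \<le> \<bar>\<Delta>\<bar>" for \<zeta>
  proof -
    have "((\<lambda>s. F (s + \<zeta>)) has_real_derivative D (c + \<zeta> *\<^sub>R u)) (at 0)"
      using deriv[OF that] by (simp add: F_def algebra_simps scaleR_add_left)
    then show ?thesis using DERIV_shift[of F _ 0 \<zeta>] by simp
  qed
  show ?thesis
  proof (cases "\<Delta> > 0")
    case True
    obtain \<zeta> where "0 < \<zeta>" "\<zeta> < \<Delta>" "F \<Delta> - F 0 = (\<Delta> - 0) * D (c + \<zeta> *\<^sub>R u)"
      using MVT2[OF True, of F "\<lambda>\<zeta>. D (c + \<zeta> *\<^sub>R u)"] dF True by auto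
    then show ?thesis by (intro exI[of _ \<zeta>]) (auto simp: F_def)
  next
    case False
    then have "\<Delta> < 0" using assms(2) by auto
    then obtain \<zeta> where "\<Delta> < \<zeta>" "\<zeta> < 0" "F 0 - F \<Delta> = (0 - \<Delta>) * D (c + \<zeta> *\<^sub>R u)"
      using MVT2[of \<Delta> 0 F "\<lambda>\<zeta>. D (c + \<zeta> *\<^sub>R u)"] dF by auto
    then show ?thesis by (intro exI[of _ \<zeta>]) (auto simp: F_def algebra_simps)
  qed
qed

text \<open>The difference quotient of \<open>f\<close> along the moving segment from \<open>y t\<close> to \<open>y t + \<delta> t *\<^sub>R u\<close>
  is, by the mean value theorem, a value of the continuous partial derivative \<open>D\<close> near \<open>y t\<^sub>0\<close>.\<close>
lemma isCont_increment_quotient: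
  fixes f :: "'a::real_normed_vector \<Rightarrow> real" and t0 :: real
  assumes S: "open S"
    and deriv: "\<And>w. w \<in> S \<Longrightarrow> ((\<lambda>s. f (w + s *\<^sub>R u)) has_real_derivative D w) (at 0)"
    and D: "continuous_on S D"
    and y: "isCont y t0" "y t0 \<in> S" and \<delta>: "isCont \<delta> t0" "\<delta> t0 = 0"
  shows "isCont (\<lambda>t. if \<delta> t = 0 then D (y t0) else (f (y t + \<delta> t *\<^sub>R u) - f (y t)) / \<delta> t) t0"
    (is "isCont ?Q t0")
proof (unfold continuous_at_eps_delta, intro allI impI)
  fix \<epsilon> :: real assume "\<epsilon> > 0"
  have "isCont D (y t0)" using D y(2) S continuous_on_eq_continuous_at by blast
  then obtain d1 where d1: "d1 > 0" "\<And>w. dist w (y t0) < d1 \<Longrightarrow> dist (D w) (D (y t0)) < \<epsilon>"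
    using \<open>\<epsilon> > 0\<close> unfolding continuous_at_eps_delta by blast
  obtain d0 where d0: "d0 > 0" "ball (y t0) d0 \<subseteq> S" using S y(2) open_contains_ball by blast
  define d where "d = min d0 d1"
  define K where "K = norm u + 1"
  have "d > 0" "K > 0" using d0 d1 by (auto simp: d_def K_def add_nonneg_pos)
  obtain e1 where e1: "e1 > 0" "\<And>t. dist t t0 < e1 \<Longrightarrow> dist (y t) (y t0) < d / 2"
    using y(1) \<open>d > 0\<close> unfolding continuous_at_eps_delta by (metis half_gt_zero)
  obtain e2 where e2: "e2 > 0" "\<And>t. dist t t0 < e2 \<Longrightarrow> dist (\<delta> t) (\<delta> t0) < d / (2 * K)"
    using \<delta>(1) \<open>d > 0\<close> \<open>K > 0\<close> unfolding continuous_at_eps_delta by (metis divide_pos_pos mult_2 add_pos_pos)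
  show "\<exists>e>0. \<forall>t. dist t t0 < e \<longrightarrow> dist (?Q t) (?Q t0) < \<epsilon>"
  proof (intro exI[of _ "min e1 e2"] conjI allI impI)
    show "min e1 e2 > 0" using e1 e2 by auto
    fix t assume "dist t t0 < min e1 e2"
    then have yt: "dist (y t) (y t0) < d / 2" and \<delta>t: "\<bar>\<delta> t\<bar> * K < d / 2"
      using e1 e2 \<delta>(2) \<open>K > 0\<close> by (auto simp: dist_real_def field_simps)
    have near: "dist (y t + \<zeta> *\<^sub>R u) (y t0) < d" if "\<bar>\<zeta>\<bar> \<le> \<bar>\<delta> t\<bar>" for \<zeta>
    proof -
      have "dist (y t + \<zeta> *\<^sub>R u) (y t0) \<le> dist (y t) (y t0) + \<bar>\<zeta>\<bar> * norm u"
        by (metis dist_commute dist_triangle_le add_diff_cancel_left' dist_norm norm_scaleR order_refl)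
      also have "\<bar>\<zeta>\<bar> * norm u \<le> \<bar>\<delta> t\<bar> * K"
        using that by (intro mult_mono) (auto simp: K_def)
      finally show ?thesis using yt \<delta>t by linarith
    qed
    show "dist (?Q t) (?Q t0) < \<epsilon>"
    proof (cases "\<delta> t = 0")
      case True then show ?thesis using \<delta>(2) \<open>\<epsilon> > 0\<close> by simp
    next
      case False
      obtain \<zeta> where \<zeta>: "\<bar>\<zeta>\<bar> < \<bar>\<delta> t\<bar>" "f (y t + \<delta> t *\<^sub>R u) - f (y t) = \<delta> t * D (y t + \<zeta> *\<^sub>R u)"
        using mvt_along_line[of "\<delta> t" f "y t" u D] False deriv near d0 by (force simp: d_def dist_commute)
      have "dist (y t + \<zeta> *\<^sub>R u) (y t0) < d1" using near[of \<zeta>] \<zeta>(1) by (simp add: d_def)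
      then show ?thesis using d1 \<zeta>(2) False \<delta>(2) by simp
    qed
  qed
qed

lemma isCont_coord_curve:
  assumes "\<And>p. p \<in> P \<Longrightarrow> isCont (\<sigma> p) t0"
  shows "isCont (coord_curve P y0 \<sigma>) t0"
  unfolding coord_curve_def continuous_at
  by (intro tendsto_vec_lambda) (auto intro!: tendsto_of_real assms[unfolded continuous_at])

text \<open>Only continuous partial derivatives are available, so the coordinates are moved one at a
  time, and each increment is handled by Caratheodory's characterisation of the derivative.\<close>
lemma has_real_derivative_coord_curve:
  fixes f :: "complex^'d::finite \<Rightarrow> real"
  assumes "open S" and "finite P"
    and "\<And>y p. y \<in> S \<Longrightarrow> p \<in> P \<Longrightarrow> ((\<lambda>s. f (y + s *\<^sub>R axis p 1)) has_real_derivative D p y) (at 0)"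
    and "\<And>p. p \<in> P \<Longrightarrow> continuous_on S (D p)"
    and "\<And>p. p \<in> P \<Longrightarrow> (\<sigma> p has_real_derivative \<sigma>' p) (at t0)"
    and "coord_curve P y0 \<sigma> t0 \<in> S"
  shows "((\<lambda>t. f (coord_curve P y0 \<sigma> t)) has_real_derivative
           (\<Sum>p\<in>P. D p (coord_curve P y0 \<sigma> t0) * \<sigma>' p)) (at t0)"
  using assms(2-)
proof (induction P arbitrary: y0)
  case empty
  then show ?case by (simp add: coord_curve_def)
next
  case (insert q P)
  define y1 where "y1 = (\<chi> p. if p = q then complex_of_real (\<sigma> q t0) else y0 $ p)"
  define ct where "ct = coord_curve P y1 \<sigma>"
  define c0 where "c0 = coord_curve (insert q P) y0 \<sigma> t0"
  define u where "u = (axis q 1 :: complex^'d)"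
  define \<Delta> where "\<Delta> t = \<sigma> q t - \<sigma> q t0" for t
  have curve_eq: "coord_curve (insert q P) y0 \<sigma> t = ct t + \<Delta> t *\<^sub>R u" for t
    using insert(2) by (auto simp: vec_eq_iff coord_curve_def ct_def y1_def u_def \<Delta>_def axis_def
        of_real_def scaleR_left_diff_distrib)
  have ct0: "ct t0 = c0"
    using insert(2) by (auto simp: vec_eq_iff coord_curve_def ct_def y1_def c0_def)
  have "c0 \<in> S" using insert.prems c0_def by auto
  have IH: "((\<lambda>t. f (ct t)) has_real_derivative (\<Sum>p\<in>P. D p c0 * \<sigma>' p)) (at t0)"
    using insert.IH[of y1] insert.prems ct0 \<open>c0 \<in> S\<close> unfolding ct_def by auto
  have "DERIV (\<sigma> q) t0 :> \<sigma>' q" using insert.prems(3) by auto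
  then obtain g where g: "\<And>t. \<Delta> t = g t * (t - t0)" "isCont g t0" "g t0 = \<sigma>' q"
    unfolding CARAT_DERIV \<Delta>_def by blast
  define M where "M t = (if \<Delta> t = 0 then D q c0 else (f (ct t + \<Delta> t *\<^sub>R u) - f (ct t)) / \<Delta> t)" for t
  have "isCont M t0"
    unfolding M_def ct0[symmetric]
  proof (rule isCont_increment_quotient[OF \<open>open S\<close>])
    show "isCont ct t0" unfolding ct_def
      by (rule isCont_coord_curve) (use insert.prems(3) DERIV_isCont in blast)
    show "isCont \<Delta> t0" unfolding \<Delta>_def using insert.prems(3) DERIV_isCont by (auto intro!: continuous_intros)
  qed (use insert.prems \<open>c0 \<in> S\<close> ct0 in \<open>auto simp: u_def \<Delta>_def\<close>)
  have "DERIV (\<lambda>t. f (ct t + \<Delta> t *\<^sub>R u) - f (ct t)) t0 :> D q c0 * \<sigma>' q"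
    unfolding CARAT_DERIV
  proof (intro exI[of _ "\<lambda>t. M t * g t"] conjI allI)
    fix t show "f (ct t + \<Delta> t *\<^sub>R u) - f (ct t) - (f (ct t0 + \<Delta> t0 *\<^sub>R u) - f (ct t0)) = M t * g t * (t - t0)"
      using g(1)[of t] by (auto simp: M_def \<Delta>_def)
  next
    show "isCont (\<lambda>t. M t * g t) t0" using \<open>isCont M t0\<close> g(2) by (intro continuous_intros)
  next
    show "M t0 * g t0 = D q c0 * \<sigma>' q" using g(3) by (simp add: M_def \<Delta>_def)
  qed
  from DERIV_add[OF IH this]
  show ?case using insert(1,2) curve_eq by (simp add: c0_def add.commute)
qed

section \<open>Iterated derivatives of smooth functions\<close>

lemma axis_in_Basis_complex [simp]: "axis p (1::complex) \<in> Basis" "axis p \<i> \<in> Basis"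
  by (auto simp: axis_in_Basis_iff Basis_complex_def)

lemma dd_Cons_eqI:
  fixes f :: "'a::real_normed_vector \<Rightarrow> real"
  shows "((\<lambda>t. dd vs f (x + t *\<^sub>R v)) has_real_derivative D) (at 0) \<Longrightarrow> dd (v # vs) f x = D"
  unfolding dd.simps(2) by (simp add: has_real_derivative_iff_has_vector_derivative vector_derivative_at)

lemma has_real_derivative_vector_derivative:
  fixes g :: "real \<Rightarrow> real"
  shows "g differentiable (at x) \<Longrightarrow> (g has_real_derivative vector_derivative g (at x)) (at x)"
  by (simp add: has_real_derivative_iff_has_vector_derivative vector_derivative_works)

lemma coord_nonzero_imp_nonzero: "y $ k \<noteq> 0 \<Longrightarrow> y \<in> - {0}"
  by (metis ComplI singletonD zero_index)

lemma smooth_on_continuous_dd: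
  "smooth_on S f \<Longrightarrow> set vs \<subseteq> Basis \<Longrightarrow> continuous_on S (dd vs f)"
  unfolding smooth_on_def by blast

lemma smooth_on_differentiable_dd:
  "smooth_on S f \<Longrightarrow> set vs \<subseteq> Basis \<Longrightarrow> v \<in> Basis \<Longrightarrow> x \<in> S \<Longrightarrow>
    (\<lambda>t. dd vs f (x + t *\<^sub>R v)) differentiable (at 0)"
  unfolding smooth_on_def by blast

lemma smooth_on_has_real_derivative_dd:
  fixes f :: "'a::euclidean_space \<Rightarrow> real"
  assumes "smooth_on S f" "set vs \<subseteq> Basis" "v \<in> Basis" "y + t0 *\<^sub>R v \<in> S"
  shows "((\<lambda>t. dd vs f (y + t *\<^sub>R v)) has_real_derivative dd (v # vs) f (y + t0 *\<^sub>R v)) (at t0)"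
proof -
  have "((\<lambda>t. dd vs f (y + t0 *\<^sub>R v + t *\<^sub>R v)) has_real_derivative dd (v # vs) f (y + t0 *\<^sub>R v)) (at 0)"
    using has_real_derivative_vector_derivative[OF smooth_on_differentiable_dd[OF assms]] by simp
  then have "((\<lambda>t. dd vs f (y + (t + t0) *\<^sub>R v)) has_real_derivative dd (v # vs) f (y + t0 *\<^sub>R v)) (at 0)"
    by (simp add: algebra_simps scaleR_add_left)
  then show ?thesis using DERIV_shift[of "\<lambda>t. dd vs f (y + t *\<^sub>R v)" _ 0 t0] by simp
qed

lemma dd_of_real:
  fixes f :: "'a::real_normed_vector \<Rightarrow> real"
  assumes "(\<lambda>s. f (y + s *\<^sub>R v)) differentiable (at 0)"
  shows "dd [v] (\<lambda>w. complex_of_real (f w)) y = complex_of_real (dd [v] f y)"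
proof -
  have "((\<lambda>s. f (y + s *\<^sub>R v)) has_real_derivative dd [v] f y) (at 0)"
    using has_real_derivative_vector_derivative[OF assms] by simp
  then have "((\<lambda>s. complex_of_real (f (y + s *\<^sub>R v))) has_vector_derivative complex_of_real (dd [v] f y)) (at 0)"
    by (rule has_vector_derivative_of_real)
  then show ?thesis by (simp add: vector_derivative_at)
qed

text \<open>The mixed derivatives \<open>\<partial>\<^sub>x\<^sub>l \<partial>\<^sub>y\<^sub>m f\<close> and \<open>\<partial>\<^sub>y\<^sub>l \<partial>\<^sub>x\<^sub>m f\<close> only enter the imaginary part.\<close>
lemma Re_dz_dzbar_of_real:
  fixes f :: "complex^'d::finite \<Rightarrow> real"
  assumes d1: "\<And>u v t. u \<in> {axis l 1, axis l \<i>} \<Longrightarrow> v \<in> {axis m 1, axis m \<i>} \<Longrightarrow>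
                 (\<lambda>s. f (z + t *\<^sub>R u + s *\<^sub>R v)) differentiable (at 0)"
    and d2: "\<And>u v. u \<in> {axis l 1, axis l \<i>} \<Longrightarrow> v \<in> {axis m 1, axis m \<i>} \<Longrightarrow>
                 (\<lambda>t. dd [v] f (z + t *\<^sub>R u)) differentiable (at 0)"
  shows "Re (dz l (dzbar m (\<lambda>w. complex_of_real (f w))) z) =
           (dd [axis l 1, axis m 1] f z + dd [axis l \<i>, axis m \<i>] f z) / 4"
proof -
  define F where "F = (\<lambda>w. complex_of_real (f w))"
  define G where "G u = (complex_of_real (dd [u, axis m 1] f z) + \<i> * complex_of_real (dd [u, axis m \<i>] f z)) / 2" for u
  have dzbar_eq: "dzbar m F (z + t *\<^sub>R u) = (complex_of_real (dd [axis m 1] f (z + t *\<^sub>R u))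
                   + \<i> * complex_of_real (dd [axis m \<i>] f (z + t *\<^sub>R u))) / 2"
    if "u \<in> {axis l 1, axis l \<i>}" for u t
    unfolding dzbar_def F_def using dd_of_real[OF d1[OF that]] by simp
  have dd_dzbar: "dd [u] (dzbar m F) z = G u" if u: "u \<in> {axis l 1, axis l \<i>}" for u
  proof -
    have "((\<lambda>t. dd [v] f (z + t *\<^sub>R u)) has_real_derivative dd [u, v] f z) (at 0)"
      if "v \<in> {axis m 1, axis m \<i>}" for v
      using has_real_derivative_vector_derivative[OF d2[OF u that]] by simp
    then have "((\<lambda>t. dzbar m F (z + t *\<^sub>R u)) has_vector_derivative G u) (at 0)"
      unfolding dzbar_eq[OF u] G_def
      by (intro has_vector_derivative_divide has_vector_derivative_add has_vector_derivative_mult_right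
          has_vector_derivative_of_real) auto
    then show ?thesis by (simp add: vector_derivative_at)
  qed
  have "dz l (dzbar m F) z = (G (axis l 1) - \<i> * G (axis l \<i>)) / 2"
    using dd_dzbar by (simp add: dz_def)
  then have "Re (dz l (dzbar m F) z) = Re ((G (axis l 1) - \<i> * G (axis l \<i>)) / 2)"
    by (simp only:)
  also have "\<dots> = (Re (G (axis l 1)) + Im (G (axis l \<i>))) / 2"
    by simp
  finally show ?thesis unfolding F_def by (simp add: G_def del: dd.simps)
qed

lemma Re_dz_dzbar_smooth:
  fixes f :: "complex^'d::finite \<Rightarrow> real"
  assumes f: "smooth_on (- {0}) f" and z: "z $ k \<noteq> 0" and l: "l \<noteq> k" and m: "m \<noteq> k"
  shows "Re (dz l (dzbar m (\<lambda>w. complex_of_real (f w))) z) =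
           (dd [axis l 1, axis m 1] f z + dd [axis l \<i>, axis m \<i>] f z) / 4"
proof (rule Re_dz_dzbar_of_real)
  fix u v t assume u: "u \<in> {axis l 1, axis l \<i>}" and v: "v \<in> {axis m 1, axis m \<i>}"
  have "(z + t *\<^sub>R u) $ k \<noteq> 0" using u z l by (auto simp: axis_def)
  then have "z + t *\<^sub>R u \<in> - {0}" by (rule coord_nonzero_imp_nonzero)
  then show "(\<lambda>s. f (z + t *\<^sub>R u + s *\<^sub>R v)) differentiable (at 0)"
    using smooth_on_differentiable_dd[OF f, of "[]" v] v by auto
next
  fix u v assume u: "u \<in> {axis l 1, axis l \<i>}" and v: "v \<in> {axis m 1, axis m \<i>}"
  have "z \<in> - {0}" using z by (rule coord_nonzero_imp_nonzero)
  then show "(\<lambda>t. dd [v] f (z + t *\<^sub>R u)) differentiable (at 0)"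
    using smooth_on_differentiable_dd[OF f, of "[v]" u] u v by auto
qed

lemma has_real_derivative_dd_coord_curve:
  fixes f :: "complex^'d::finite \<Rightarrow> real"
  assumes f: "smooth_on (- {0}) f" and vs: "set vs \<subseteq> Basis"
    and \<sigma>: "\<And>p. p \<in> P \<Longrightarrow> (\<sigma> p has_real_derivative \<sigma>' p) (at t)" and "finite P"
    and "coord_curve P y0 \<sigma> t \<noteq> 0"
  shows "((\<lambda>t. dd vs f (coord_curve P y0 \<sigma> t)) has_real_derivative
           (\<Sum>p\<in>P. dd (axis p 1 # vs) f (coord_curve P y0 \<sigma> t) * \<sigma>' p)) (at t)"
proof (rule has_real_derivative_coord_curve[where S = "- {0}"])
  show "((\<lambda>s. dd vs f (y + s *\<^sub>R axis p 1)) has_real_derivative dd (axis p 1 # vs) f y) (at 0)"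
    if "y \<in> - {0}" for y p
    using smooth_on_has_real_derivative_dd[OF f vs, of "axis p 1" y 0] that by simp
  show "continuous_on (- {0}) (dd (axis p 1 # vs) f)" for p
    using smooth_on_continuous_dd[OF f, of "axis p 1 # vs"] vs by simp
qed (use assms in auto)

section \<open>Phase invariance\<close>

definition phase_invariant :: "(complex^'d::finite \<Rightarrow> real) \<Rightarrow> bool" where
  "phase_invariant \<Phi> \<longleftrightarrow> (\<forall>p \<theta> z. \<Phi> (\<chi> q. if q = p then cis \<theta> * z $ q else z $ q) = \<Phi> z)"

lemma G_invariant_imp_phase_invariant: "G_invariant \<Phi> \<Longrightarrow> phase_invariant \<Phi>"
  unfolding G_invariant_def phase_invariant_def by blast

lemma cis_minus_Arg_mult: "cis (- Arg w) * w = complex_of_real (cmod w)"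
proof (cases "w = 0")
  case False
  have "w = complex_of_real (cmod w) * cis (Arg w)"
    using cis_Arg[OF False] by (simp add: sgn_div_norm scaleR_conv_of_real field_simps)
  then have "cis (- Arg w) * w = complex_of_real (cmod w) * (cis (- Arg w) * cis (Arg w))"
    by (metis mult.left_commute)
  then show ?thesis by (simp add: cis_mult)
qed simp

lemma phase_invariant_rotate:
  "phase_invariant \<Phi> \<Longrightarrow> \<Phi> (\<chi> q. if q = p then cis (- Arg (w $ p)) * w $ q else w $ q) = \<Phi> w"
  unfolding phase_invariant_def by blast

lemma phase_invariant_abs_coords:
  assumes "phase_invariant \<Phi>"
  shows "\<Phi> (\<chi> p. complex_of_real (cmod (z $ p))) = \<Phi> z"
proof -
  have "\<Phi> (\<chi> p. if p \<in> Q then complex_of_real (cmod (z $ p)) else z $ p) = \<Phi> z" if "finite Q" for Q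
    using that
  proof (induction Q rule: finite_induct)
    case (insert q Q)
    define w where "w = (\<chi> p. if p \<in> Q then complex_of_real (cmod (z $ p)) else z $ p)"
    have "(\<chi> r. if r = q then cis (- Arg (w $ q)) * w $ r else w $ r) =
        (\<chi> p. if p \<in> insert q Q then complex_of_real (cmod (z $ p)) else z $ p)"
      using insert(2) by (auto simp: vec_eq_iff w_def cis_minus_Arg_mult)
    then show ?case using phase_invariant_rotate[OF assms, of q w] insert(3) w_def by simp
  qed simp
  from this[of UNIV] show ?thesis by simp
qed

lemma phase_invariant_imag_step:
  assumes "phase_invariant \<Phi>" and ym: "y $ m = complex_of_real r"
  shows "\<Phi> (y + s *\<^sub>R axis m \<i>) = \<Phi> (y + (sqrt (r\<^sup>2 + s\<^sup>2) - r) *\<^sub>R axis m 1)"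
proof -
  define w where "w = y + s *\<^sub>R axis m \<i>"
  have "w $ m = Complex r s" using ym by (simp add: w_def axis_def complex_eq_iff)
  then have "cis (- Arg (w $ m)) * w $ m = complex_of_real (sqrt (r\<^sup>2 + s\<^sup>2))"
    by (simp add: cis_minus_Arg_mult cmod_def)
  then have "(\<chi> q. if q = m then cis (- Arg (w $ m)) * w $ q else w $ q) =
      y + (sqrt (r\<^sup>2 + s\<^sup>2) - r) *\<^sub>R axis m 1"
    using ym by (auto simp: vec_eq_iff w_def axis_def of_real_def scaleR_left_diff_distrib)
  then show ?thesis using phase_invariant_rotate[OF assms(1), of m w] by (simp add: w_def)
qed

lemma has_real_derivative_sqrt_sum_sq:
  assumes "r > 0"
  shows "((\<lambda>s. sqrt (r\<^sup>2 + s\<^sup>2)) has_real_derivative t / sqrt (r\<^sup>2 + t\<^sup>2)) (at t)"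
proof -
  have "r\<^sup>2 + t\<^sup>2 > 0" using assms by (simp add: add_pos_nonneg)
  then show ?thesis
    by (auto intro!: derivative_eq_intros simp: field_simps)
qed

context
  fixes \<Phi> :: "complex^'d::finite \<Rightarrow> real"
  assumes smooth: "smooth_on (- {0}) \<Phi>" and phase: "phase_invariant \<Phi>"
begin

lemma phase_invariant_dd_imag:
  assumes ym: "y $ m = complex_of_real r" and r: "r > 0"
  shows "dd [axis m \<i>] \<Phi> y = 0"
proof -
  have "y \<in> - {0}" using ym r by (intro coord_nonzero_imp_nonzero[of y m]) simp
  then have "((\<lambda>u. \<Phi> (y + u *\<^sub>R axis m 1)) has_real_derivative dd [axis m 1] \<Phi> y) (at (sqrt (r\<^sup>2 + 0\<^sup>2) - r))"
    using smooth_on_has_real_derivative_dd[OF smooth, of "[]" "axis m 1" y 0] r by simp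
  text \<open>The rotated real step \<open>\<surd>(r\<^sup>2 + s\<^sup>2) - r\<close> has derivative \<open>0\<close> at \<open>s = 0\<close>.\<close>
  from DERIV_chain2[OF this DERIV_diff[OF has_real_derivative_sqrt_sum_sq[OF r, of 0] DERIV_const]]
  have "((\<lambda>s. \<Phi> (y + s *\<^sub>R axis m \<i>)) has_real_derivative 0) (at 0)"
    using phase_invariant_imag_step[OF phase ym] by simp
  then show ?thesis by (intro dd_Cons_eqI) simp
qed

lemma phase_invariant_dd_imag_imag_offdiag:
  assumes lm: "l \<noteq> m" and ym: "y $ m = complex_of_real r" and r: "r > 0"
  shows "dd [axis l \<i>, axis m \<i>] \<Phi> y = 0"
proof -
  have "(y + t *\<^sub>R axis l \<i>) $ m = complex_of_real r" for t
    using ym lm by (simp add: axis_def)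
  then have "dd [axis m \<i>] \<Phi> (y + t *\<^sub>R axis l \<i>) = 0" for t
    using phase_invariant_dd_imag r by blast
  then have const: "(\<lambda>t. dd [axis m \<i>] \<Phi> (y + t *\<^sub>R axis l \<i>)) = (\<lambda>t. 0)" by auto
  show ?thesis by (intro dd_Cons_eqI) (simp only: const DERIV_const)
qed

text \<open>Second derivative in the imaginary direction: with \<open>\<rho> t = \<surd>(r\<^sup>2 + t\<^sup>2)\<close>, phase invariance gives
  \<open>\<partial>\<^sub>y \<Phi> (y + t i e\<^sub>l) = \<partial>\<^sub>x \<Phi> (y + (\<rho> t - r) e\<^sub>l) \<cdot> t / \<rho> t\<close>, whose derivative at \<open>0\<close> is \<open>\<partial>\<^sub>x \<Phi> y / r\<close>.\<close>
lemma phase_invariant_dd_imag_imag_diag: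
  assumes yl: "y $ l = complex_of_real r" and r: "r > 0"
  shows "dd [axis l \<i>, axis l \<i>] \<Phi> y = dd [axis l 1] \<Phi> y / r"
proof -
  define \<rho> where "\<rho> t = sqrt (r\<^sup>2 + t\<^sup>2)" for t
  have \<rho>pos: "\<rho> t > 0" for t using r by (simp add: \<rho>_def add_pos_nonneg)
  have \<rho>0: "\<rho> 0 = r" using r by (simp add: \<rho>_def)
  have d\<rho>: "(\<rho> has_real_derivative t / \<rho> t) (at t)" for t
    unfolding \<rho>_def by (rule has_real_derivative_sqrt_sum_sq[OF r])
  have real_step: "y + u *\<^sub>R axis l 1 \<in> - {0}" if "u > - r" for u
    using that yl by (intro coord_nonzero_imp_nonzero[of _ l]) (simp add: axis_def complex_eq_iff)
  have step: "dd [axis l \<i>] \<Phi> (y + t *\<^sub>R axis l \<i>) = dd [axis l 1] \<Phi> (y + (\<rho> t - r) *\<^sub>R axis l 1) * (t / \<rho> t)" for t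
  proof -
    have eq: "\<Phi> (y + t *\<^sub>R axis l \<i> + s *\<^sub>R axis l \<i>) = \<Phi> (y + (\<rho> (s + t) - r) *\<^sub>R axis l 1)" for s
      using phase_invariant_imag_step[OF phase yl, of "s + t"]
      by (simp add: \<rho>_def algebra_simps scaleR_add_left)
    have outer: "((\<lambda>u. \<Phi> (y + u *\<^sub>R axis l 1)) has_real_derivative dd [axis l 1] \<Phi> (y + (\<rho> t - r) *\<^sub>R axis l 1)) (at (\<rho> t - r))"
      using smooth_on_has_real_derivative_dd[OF smooth, of "[]"] real_step \<rho>pos[of t] by simp
    have inner: "((\<lambda>s. \<rho> (s + t) - r) has_real_derivative t / \<rho> t) (at 0)"
      using DERIV_shift[of "\<lambda>s. \<rho> s - r" "t / \<rho> t" 0 t] DERIV_diff[OF d\<rho> DERIV_const] by simp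
    have "((\<lambda>s. \<Phi> (y + t *\<^sub>R axis l \<i> + s *\<^sub>R axis l \<i>)) has_real_derivative
            dd [axis l 1] \<Phi> (y + (\<rho> t - r) *\<^sub>R axis l 1) * (t / \<rho> t)) (at 0)"
      unfolding eq using DERIV_chain2[of "\<lambda>u. \<Phi> (y + u *\<^sub>R axis l 1)", OF _ inner] outer by simp
    then show ?thesis by (intro dd_Cons_eqI) simp
  qed
  have "((\<lambda>u. dd [axis l 1] \<Phi> (y + u *\<^sub>R axis l 1)) has_real_derivative dd [axis l 1, axis l 1] \<Phi> y) (at (\<rho> 0 - r))"
    using smooth_on_has_real_derivative_dd[OF smooth, of "[axis l 1]" "axis l 1" y 0] real_step[of 0] r \<rho>0
    by simp
  from DERIV_chain2[OF this DERIV_diff[OF d\<rho> DERIV_const]]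
  have A: "((\<lambda>t. dd [axis l 1] \<Phi> (y + (\<rho> t - r) *\<^sub>R axis l 1)) has_real_derivative 0) (at 0)"
    by simp
  have B: "((\<lambda>t. t / \<rho> t) has_real_derivative 1 / r) (at 0)"
    using DERIV_divide[OF DERIV_ident d\<rho>, of 0] \<rho>0 r by simp
  from DERIV_mult[OF A B]
  have "((\<lambda>t. dd [axis l \<i>] \<Phi> (y + t *\<^sub>R axis l \<i>)) has_real_derivative dd [axis l 1] \<Phi> y / r) (at 0)"
    unfolding step using \<rho>0 by simp
  then show ?thesis by (rule dd_Cons_eqI)
qed

end

section \<open>Derivatives of the Fubini--Study potential\<close>

definition fs_quad :: "'d::finite \<Rightarrow> complex^'d \<Rightarrow> real" where
  "fs_quad j y = 1 + (\<Sum>p\<in>-{j}. (cmod (y $ p))\<^sup>2)"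

lemma fs_pot_eq: "fs_pot j = (\<lambda>w. complex_of_real (ln (fs_quad j w)))"
  by (simp add: fs_pot_def fs_quad_def)

lemma fs_quad_pos: "fs_quad j y > 0"
  unfolding fs_quad_def by (simp add: add_pos_nonneg sum_nonneg)

lemma scaleR_axis_nth: "(r *\<^sub>R axis q c) $ p = (if p = q then complex_of_real r * c else 0)"
  by (simp only: vector_scaleR_component) (simp add: axis_def scaleR_conv_of_real)

lemma fs_quad_line:
  assumes "m \<noteq> j" "cmod c = 1"
  shows "fs_quad j (y + s *\<^sub>R axis m c) = fs_quad j y + 2 * s * Re (cnj c * y $ m) + s\<^sup>2"
proof -
  have "(cmod (y $ m + complex_of_real s * c))\<^sup>2 = (cmod (y $ m))\<^sup>2 + 2 * s * Re (cnj c * y $ m) + s\<^sup>2 * (cmod c)\<^sup>2"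
    unfolding cmod_power2 by (simp add: algebra_simps power2_eq_square)
  then have sq: "(cmod (y $ m + complex_of_real s * c))\<^sup>2 = (cmod (y $ m))\<^sup>2 + 2 * s * Re (cnj c * y $ m) + s\<^sup>2"
    using assms(2) by simp
  have "(\<Sum>p\<in>-{j}. (cmod ((y + s *\<^sub>R axis m c) $ p))\<^sup>2) =
        (\<Sum>p\<in>-{j}. (cmod (y $ p))\<^sup>2 + (if p = m then 2 * s * Re (cnj c * y $ m) + s\<^sup>2 else 0))"
    by (rule sum.cong) (auto simp del: vector_scaleR_component simp add: scaleR_axis_nth sq)
  then show ?thesis using assms(1) by (simp add: fs_quad_def sum.distrib)
qed

lemma has_real_derivative_ln_fs_quad_line:
  assumes "m \<noteq> j" "cmod c = 1"
  shows "((\<lambda>s. ln (fs_quad j (y + s *\<^sub>R axis m c))) has_real_derivative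
           2 * Re (cnj c * y $ m) / fs_quad j y) (at 0)"
  unfolding fs_quad_line[OF assms] using fs_quad_pos[of j y]
  by (auto intro!: derivative_eq_intros)

lemma dd_ln_fs_quad:
  assumes "m \<noteq> j" "cmod c = 1"
  shows "dd [axis m c] (\<lambda>w. ln (fs_quad j w)) y = 2 * Re (cnj c * y $ m) / fs_quad j y"
  using has_real_derivative_ln_fs_quad_line[OF assms] by (intro dd_Cons_eqI) simp

lemma has_real_derivative_dd_ln_fs_quad:
  assumes "m \<noteq> j" "cmod c = 1" "l \<noteq> j" "cmod c' = 1"
  shows "((\<lambda>t. dd [axis m c] (\<lambda>w. ln (fs_quad j w)) (z + t *\<^sub>R axis l c')) has_real_derivative
           (2 * (if l = m then Re (cnj c * c') else 0) * fs_quad j z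
            - 2 * Re (cnj c * z $ m) * (2 * Re (cnj c' * z $ l))) / (fs_quad j z)\<^sup>2) (at 0)"
proof -
  define A where "A = Re (cnj c * z $ m)"
  define B where "B = (if l = m then Re (cnj c * c') else 0)"
  define C where "C = Re (cnj c' * z $ l)"
  define Q where "Q = fs_quad j z"
  have "Q > 0" using fs_quad_pos Q_def by auto
  have line: "Re (cnj c * (z + t *\<^sub>R axis l c') $ m) = A + t * B" for t
    by (auto simp del: vector_scaleR_component simp add: A_def B_def scaleR_axis_nth algebra_simps)
  have eq: "dd [axis m c] (\<lambda>w. ln (fs_quad j w)) (z + t *\<^sub>R axis l c') = 2 * (A + t * B) / (Q + 2 * t * C + t\<^sup>2)" for t
    unfolding dd_ln_fs_quad[OF assms(1,2)] fs_quad_line[OF assms(3,4)] line Q_def C_def ..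
  have "((\<lambda>t. 2 * (A + t * B) / (Q + 2 * t * C + t\<^sup>2)) has_real_derivative
         (2 * B * Q - 2 * A * (2 * C)) / Q\<^sup>2) (at 0)"
    using \<open>Q > 0\<close> by (auto intro!: derivative_eq_intros simp: power2_eq_square)
  then show ?thesis unfolding eq by (simp add: A_def B_def C_def Q_def)
qed

lemma Re_dz_dzbar_fs_pot:
  assumes l: "l \<noteq> j" and m: "m \<noteq> j"
  shows "Re (dz l (dzbar m (fs_pot j)) z) =
     (if l = m then 1 / fs_quad j z else 0) - Re (z $ l * cnj (z $ m)) / (fs_quad j z)\<^sup>2"
proof -
  have unit: "cmod (1::complex) = 1" "cmod \<i> = 1" by auto
  have second: "dd [axis l c, axis m c] (\<lambda>w. ln (fs_quad j w)) z =
      (2 * (if l = m then 1 else 0) * fs_quad j z - 2 * Re (cnj c * z $ m) * (2 * Re (cnj c * z $ l))) / (fs_quad j z)\<^sup>2"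
    if "cmod c = 1" for c
  proof -
    have "Re (cnj c * c) = 1" using that complex_norm_square[of c] by (simp add: mult.commute)
    then show ?thesis using has_real_derivative_dd_ln_fs_quad[OF m that l that, of z]
      by (intro dd_Cons_eqI) (simp only:)
  qed
  have "Re (dz l (dzbar m (fs_pot j)) z) =
      (dd [axis l 1, axis m 1] (\<lambda>w. ln (fs_quad j w)) z + dd [axis l \<i>, axis m \<i>] (\<lambda>w. ln (fs_quad j w)) z) / 4"
    unfolding fs_pot_eq
  proof (rule Re_dz_dzbar_of_real)
    fix u v t assume "u \<in> {axis l 1, axis l \<i>}" and "v \<in> {axis m 1, axis m \<i>}"
    then obtain c where "v = axis m c" "cmod c = 1" using unit by auto
    then show "(\<lambda>s. ln (fs_quad j (z + t *\<^sub>R u + s *\<^sub>R v))) differentiable (at 0)"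
      using has_real_derivative_ln_fs_quad_line[OF m] real_differentiable_def by blast
  next
    fix u v assume "u \<in> {axis l 1, axis l \<i>}" and "v \<in> {axis m 1, axis m \<i>}"
    then obtain c c' where "v = axis m c" "cmod c = 1" "u = axis l c'" "cmod c' = 1" using unit by auto
    then show "(\<lambda>t. dd [v] (\<lambda>w. ln (fs_quad j w)) (z + t *\<^sub>R u)) differentiable (at 0)"
      using has_real_derivative_dd_ln_fs_quad[OF m _ l] real_differentiable_def by blast
  qed
  also have "\<dots> = ((2 * (if l = m then 1 else 0) * fs_quad j z - 2 * Re (z $ m) * (2 * Re (z $ l))) / (fs_quad j z)\<^sup>2
      + (2 * (if l = m then 1 else 0) * fs_quad j z - 2 * Im (z $ m) * (2 * Im (z $ l))) / (fs_quad j z)\<^sup>2) / 4"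
  proof -
    have "Re (cnj 1 * w) = Re w" "Re (cnj \<i> * w) = Im w" for w by simp_all
    then show ?thesis unfolding second[OF unit(1)] second[OF unit(2)] by (simp only:)
  qed
  also have "\<dots> = (if l = m then 1 / fs_quad j z else 0) - Re (z $ l * cnj (z $ m)) / (fs_quad j z)\<^sup>2"
    using fs_quad_pos[of j z] by (cases "l = m") (simp_all add: field_simps power2_eq_square)
  finally show ?thesis .
qed

section \<open>Convexity in logarithmic coordinates\<close>

lemma pos_def_herm_nonneg:
  assumes "pos_def_herm H I"
  shows "0 \<le> Re (\<Sum>l\<in>I. \<Sum>m\<in>I. H l m * \<xi> l * cnj (\<xi> m))"
proof (cases "\<exists>p\<in>I. \<xi> p \<noteq> 0")
  case True
  define \<eta> where "\<eta> p = (if p \<in> I then \<xi> p else 0)" for p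
  have "\<forall>p. p \<notin> I \<longrightarrow> \<eta> p = 0" "\<exists>p\<in>I. \<eta> p \<noteq> 0"
    using True by (auto simp: \<eta>_def)
  then have "0 < Re (\<Sum>l\<in>I. \<Sum>m\<in>I. H l m * \<eta> l * cnj (\<eta> m))"
    using assms unfolding pos_def_herm_def by blast
  also have "(\<Sum>l\<in>I. \<Sum>m\<in>I. H l m * \<eta> l * cnj (\<eta> m)) = (\<Sum>l\<in>I. \<Sum>m\<in>I. H l m * \<xi> l * cnj (\<xi> m))"
    unfolding \<eta>_def by (intro sum.cong) auto
  finally show ?thesis by simp
qed simp

lemma quadratic_form_split:
  fixes K C :: "'d \<Rightarrow> 'd \<Rightarrow> real"
  assumes "finite P"
    and "\<And>l m. l \<in> P \<Longrightarrow> m \<in> P \<Longrightarrow> K l m = (if l = m then \<alpha> l else 0) - \<gamma> * \<beta> l * \<beta> m + C l m"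
  shows "(\<Sum>l\<in>P. \<Sum>m\<in>P. K l m * s l * s m) =
           (\<Sum>l\<in>P. \<alpha> l * (s l)\<^sup>2) - \<gamma> * (\<Sum>l\<in>P. \<beta> l * s l)\<^sup>2 + (\<Sum>l\<in>P. \<Sum>m\<in>P. C l m * s l * s m)"
proof -
  have diag: "(\<Sum>m\<in>P. (if l = m then \<alpha> l else 0) * s l * s m) = \<alpha> l * (s l)\<^sup>2" if "l \<in> P" for l
  proof -
    have "(\<Sum>m\<in>P. (if l = m then \<alpha> l else 0) * s l * s m) = (\<Sum>m\<in>P. if l = m then \<alpha> l * s l * s m else 0)"
      by (intro sum.cong) auto
    then show ?thesis using assms(1) that by (simp add: power2_eq_square)
  qed
  have "(\<Sum>l\<in>P. \<beta> l * s l)\<^sup>2 = (\<Sum>l\<in>P. \<Sum>m\<in>P. \<beta> l * \<beta> m * s l * s m)"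
    by (simp add: power2_eq_square sum_product algebra_simps)
  then have "\<gamma> * (\<Sum>l\<in>P. \<beta> l * s l)\<^sup>2 = (\<Sum>l\<in>P. \<Sum>m\<in>P. \<gamma> * \<beta> l * \<beta> m * s l * s m)"
    by (simp add: sum_distrib_left mult.assoc)
  moreover have "(\<Sum>l\<in>P. \<Sum>m\<in>P. K l m * s l * s m) = (\<Sum>l\<in>P. \<Sum>m\<in>P. (if l = m then \<alpha> l else 0) * s l * s m)
      - (\<Sum>l\<in>P. \<Sum>m\<in>P. \<gamma> * \<beta> l * \<beta> m * s l * s m) + (\<Sum>l\<in>P. \<Sum>m\<in>P. C l m * s l * s m)"
  proof -
    have "K l m * s l * s m = (if l = m then \<alpha> l else 0) * s l * s m - \<gamma> * \<beta> l * \<beta> m * s l * s m + C l m * s l * s m"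
      if "l \<in> P" "m \<in> P" for l m
      by (simp only: assms(2)[OF that] left_diff_distrib distrib_right)
    then show ?thesis by (simp add: sum.distrib sum_subtractf)
  qed
  ultimately show ?thesis using diag by simp
qed

lemma has_real_derivative_ln_sum_exp:
  fixes x v :: "'d::finite \<Rightarrow> real"
  defines "S \<equiv> \<lambda>t. (\<Sum>p\<in>UNIV. exp (x p + t * v p))"
    and "S1 \<equiv> \<lambda>t. (\<Sum>p\<in>UNIV. v p * exp (x p + t * v p))"
    and "S2 \<equiv> \<lambda>t. (\<Sum>p\<in>UNIV. (v p)\<^sup>2 * exp (x p + t * v p))"
  shows "((\<lambda>t. ln (S t)) has_real_derivative S1 t / S t) (at t)"
    and "((\<lambda>t. S1 t / S t) has_real_derivative S2 t / S t - (S1 t)\<^sup>2 / (S t)\<^sup>2) (at t)"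
proof -
  have "S t > 0" unfolding S_def by (intro sum_pos) auto
  have dS: "(S has_real_derivative S1 t) (at t)" unfolding S_def S1_def
    by (rule DERIV_sum) (auto intro!: derivative_eq_intros simp: algebra_simps)
  have dS1: "(S1 has_real_derivative S2 t) (at t)" unfolding S2_def S1_def
    by (rule DERIV_sum) (auto intro!: derivative_eq_intros simp: algebra_simps power2_eq_square)
  show "((\<lambda>t. ln (S t)) has_real_derivative S1 t / S t) (at t)"
    using DERIV_chain2[OF DERIV_ln_divide[OF \<open>S t > 0\<close>] dS] by simp
  show "((\<lambda>t. S1 t / S t) has_real_derivative S2 t / S t - (S1 t)\<^sup>2 / (S t)\<^sup>2) (at t)"
    using \<open>S t > 0\<close> by (intro DERIV_cong[OF DERIV_divide[OF dS1 dS]]) (auto simp: field_simps power2_eq_square)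
qed

text \<open>\<open>exp_coords x\<close> is the point with \<open>|z\<^sub>p|\<^sup>2 = exp x\<^sub>p\<close>, and \<open>log_potential a \<Phi> x\<close> is \<open>a ln |z|\<^sup>2 + \<Phi> z\<close> there,
  the potential of \<open>g + dd\<^sup>c \<phi>\<close> on \<open>\<complex>\<^sup>m\<^sup>+\<^sup>1 - {0}\<close>.\<close>
definition exp_coords :: "('d::finite \<Rightarrow> real) \<Rightarrow> complex^'d" where
  "exp_coords x = (\<chi> p. complex_of_real (exp (x p / 2)))"

definition log_potential :: "real \<Rightarrow> (complex^'d::finite \<Rightarrow> real) \<Rightarrow> ('d \<Rightarrow> real) \<Rightarrow> real" where
  "log_potential a \<Phi> x = a * ln (\<Sum>p\<in>UNIV. exp (x p)) + \<Phi> (exp_coords x)"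

lemma exp_coords_nonzero: "exp_coords x \<noteq> 0"
  using coord_nonzero_imp_nonzero[of "exp_coords x" undefined] by (auto simp: exp_coords_def)

lemma proj_funD: "proj_fun \<Phi> \<Longrightarrow> z \<noteq> 0 \<Longrightarrow> c \<noteq> 0 \<Longrightarrow> \<Phi> (c *s z) = \<Phi> z"
  unfolding proj_fun_def by blast

lemma log_potential_add_const:
  assumes "proj_fun \<Phi>"
  shows "log_potential a \<Phi> (\<lambda>p. x p + s) = log_potential a \<Phi> x + a * s"
proof -
  have "exp_coords (\<lambda>p. x p + s) = complex_of_real (exp (s / 2)) *s exp_coords x"
    by (simp add: vec_eq_iff exp_coords_def add_divide_distrib exp_add mult.commute)
  then have "\<Phi> (exp_coords (\<lambda>p. x p + s)) = \<Phi> (exp_coords x)"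
    using proj_funD[OF assms exp_coords_nonzero] by simp
  moreover have "(\<Sum>p\<in>UNIV. exp (x p + s)) = exp s * (\<Sum>p\<in>UNIV. exp (x p))"
    by (simp add: exp_add sum_distrib_left mult.commute)
  moreover have "(\<Sum>p\<in>UNIV. exp (x p)) > 0" by (intro sum_pos) auto
  ultimately show ?thesis unfolding log_potential_def by (simp add: ln_mult distrib_left)
qed

definition levi_matrix :: "real \<Rightarrow> (complex^'d::finite \<Rightarrow> real) \<Rightarrow> 'd \<Rightarrow> complex^'d \<Rightarrow> 'd \<Rightarrow> 'd \<Rightarrow> complex" where
  "levi_matrix a \<Phi> j z l m =
     of_real a * dz l (dzbar m (fs_pot j)) z + dz l (dzbar m (\<lambda>w. complex_of_real (\<Phi> w))) z"

lemma admissibleD: "admissible a \<Phi> \<Longrightarrow> z $ j = 1 \<Longrightarrow> pos_def_herm (levi_matrix a \<Phi> j z) (-{j})"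
  unfolding admissible_def levi_matrix_def by blast

lemma Re_levi_matrix_exp_coords:
  fixes \<Phi> :: "complex^'d::finite \<Rightarrow> real"
  assumes smooth: "smooth_on (- {0}) \<Phi>" and phase: "phase_invariant \<Phi>"
    and yj: "y j = 0" and l: "l \<noteq> j" and m: "m \<noteq> j"
  defines "S \<equiv> \<Sum>p\<in>UNIV. exp (y p)" and "\<sigma> \<equiv> \<lambda>p. exp (y p / 2)"
  shows "4 * Re (levi_matrix a \<Phi> j (exp_coords y) l m) =
    (if l = m then 4 * a / S + dd [axis l 1] \<Phi> (exp_coords y) / \<sigma> l else 0)
    - 4 * a / S\<^sup>2 * \<sigma> l * \<sigma> m + dd [axis l 1, axis m 1] \<Phi> (exp_coords y)"
proof -
  define z where "z = exp_coords y"
  have zj: "z $ j = 1" and zp: "z $ p = complex_of_real (\<sigma> p)" for p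
    using yj by (simp_all add: z_def exp_coords_def \<sigma>_def)
  have \<sigma>pos: "\<sigma> p > 0" for p by (simp add: \<sigma>_def)
  have "fs_quad j z = exp (y j) + (\<Sum>p\<in>-{j}. exp (y p))"
    using yj by (simp add: fs_quad_def zp \<sigma>_def power2_eq_square exp_add[symmetric])
  also have "\<dots> = S" by (simp add: S_def sum.remove[of UNIV j] Compl_eq_Diff_UNIV)
  finally have Q: "fs_quad j z = S" .
  have "dd [axis l \<i>, axis m \<i>] \<Phi> z = (if l = m then dd [axis l 1] \<Phi> z / \<sigma> l else 0)"
    using phase_invariant_dd_imag_imag_diag[OF smooth phase zp \<sigma>pos]
      phase_invariant_dd_imag_imag_offdiag[OF smooth phase _ zp \<sigma>pos] by auto
  then have "Re (levi_matrix a \<Phi> j z l m) = a * ((if l = m then 1 / S else 0) - \<sigma> l * \<sigma> m / S\<^sup>2)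
      + (dd [axis l 1, axis m 1] \<Phi> z + (if l = m then dd [axis l 1] \<Phi> z / \<sigma> l else 0)) / 4"
    using Re_dz_dzbar_fs_pot[OF l m, of z] Re_dz_dzbar_smooth[OF smooth _ l m, of z] zj zp[of l] zp[of m]
    unfolding levi_matrix_def Q by simp
  then show ?thesis unfolding z_def[symmetric] by (simp only:) (cases "l = m", simp_all del: dd.simps add: algebra_simps)
qed

text \<open>For \<open>y j = v j = 0\<close> these are the first and second derivatives of
  \<open>t \<mapsto> log_potential a \<Phi> (y + t v)\<close> at \<open>t = 0\<close>, computed in the chart \<open>z\<^sub>j = 1\<close>.\<close>
definition log_potential_slope :: "real \<Rightarrow> (complex^'d::finite \<Rightarrow> real) \<Rightarrow> 'd \<Rightarrow> ('d \<Rightarrow> real) \<Rightarrow> ('d \<Rightarrow> real) \<Rightarrow> real" where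
  "log_potential_slope a \<Phi> j y v =
     a * ((\<Sum>p\<in>UNIV. v p * exp (y p)) / (\<Sum>p\<in>UNIV. exp (y p)))
     + (\<Sum>m\<in>-{j}. dd [axis m 1] \<Phi> (exp_coords y) * (v m / 2 * exp (y m / 2)))"

definition log_potential_hessian :: "real \<Rightarrow> (complex^'d::finite \<Rightarrow> real) \<Rightarrow> 'd \<Rightarrow> ('d \<Rightarrow> real) \<Rightarrow> ('d \<Rightarrow> real) \<Rightarrow> real" where
  "log_potential_hessian a \<Phi> j y v =
     a * ((\<Sum>p\<in>UNIV. (v p)\<^sup>2 * exp (y p)) / (\<Sum>p\<in>UNIV. exp (y p))
          - (\<Sum>p\<in>UNIV. v p * exp (y p))\<^sup>2 / (\<Sum>p\<in>UNIV. exp (y p))\<^sup>2)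
     + (\<Sum>l\<in>-{j}. \<Sum>m\<in>-{j}. dd [axis l 1, axis m 1] \<Phi> (exp_coords y)
          * (v l / 2 * exp (y l / 2)) * (v m / 2 * exp (y m / 2)))
     + (\<Sum>m\<in>-{j}. dd [axis m 1] \<Phi> (exp_coords y) * v m / 2 * (v m / 2 * exp (y m / 2)))"

text \<open>The Hessian is \<open>4\<close> times the Levi form \<open>levi_matrix a \<Phi> j\<close> evaluated on the real vector
  \<open>s\<^sub>p = v\<^sub>p exp (y\<^sub>p / 2) / 2\<close>.\<close>
lemma log_potential_hessian_nonneg:
  fixes \<Phi> :: "complex^'d::finite \<Rightarrow> real"
  assumes smooth: "smooth_on (- {0}) \<Phi>" and phase: "phase_invariant \<Phi>" and adm: "admissible a \<Phi>"
    and yj: "y j = 0" and vj: "v j = 0"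
  shows "0 \<le> log_potential_hessian a \<Phi> j y v"
proof -
  define z where "z = exp_coords y"
  define S where "S = (\<Sum>p\<in>UNIV. exp (y p))"
  define \<sigma> where "\<sigma> p = exp (y p / 2)" for p
  define s where "s p = v p / 2 * \<sigma> p" for p
  define H where "H = levi_matrix a \<Phi> j z"
  have \<sigma>pos: "\<sigma> p > 0" for p by (simp add: \<sigma>_def)
  have sum_rest: "(\<Sum>p\<in>-{j}. f p) = (\<Sum>p\<in>UNIV. f p)" if "f j = 0" for f :: "'d \<Rightarrow> real"
    using that by (simp add: sum.remove[of UNIV j] Compl_eq_Diff_UNIV)
  have s_sq: "(s p)\<^sup>2 = (v p)\<^sup>2 * exp (y p) / 4" and \<sigma>s: "\<sigma> p * s p = v p * exp (y p) / 2" for p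
    by (simp_all add: s_def \<sigma>_def power2_eq_square exp_add[symmetric])
  have "(\<Sum>l\<in>-{j}. \<Sum>m\<in>-{j}. 4 * Re (H l m) * s l * s m) =
      (\<Sum>l\<in>-{j}. (4 * a / S + dd [axis l 1] \<Phi> z / \<sigma> l) * (s l)\<^sup>2) - 4 * a / S\<^sup>2 * (\<Sum>l\<in>-{j}. \<sigma> l * s l)\<^sup>2
      + (\<Sum>l\<in>-{j}. \<Sum>m\<in>-{j}. dd [axis l 1, axis m 1] \<Phi> z * s l * s m)"
    using Re_levi_matrix_exp_coords[where y = y and j = j, OF smooth phase yj]
    by (intro quadratic_form_split) (auto simp: H_def z_def S_def \<sigma>_def)
  also have "(\<Sum>l\<in>-{j}. (4 * a / S + dd [axis l 1] \<Phi> z / \<sigma> l) * (s l)\<^sup>2) =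
      4 * a / S * ((\<Sum>p\<in>UNIV. (v p)\<^sup>2 * exp (y p)) / 4) + (\<Sum>l\<in>-{j}. dd [axis l 1] \<Phi> z * v l / 2 * s l)"
  proof -
    have "(\<Sum>l\<in>-{j}. (4 * a / S + dd [axis l 1] \<Phi> z / \<sigma> l) * (s l)\<^sup>2) =
        4 * a / S * (\<Sum>l\<in>-{j}. (s l)\<^sup>2) + (\<Sum>l\<in>-{j}. dd [axis l 1] \<Phi> z / \<sigma> l * (s l)\<^sup>2)"
      by (simp only: distrib_right sum.distrib sum_distrib_left)
    also have "(\<Sum>l\<in>-{j}. (s l)\<^sup>2) = (\<Sum>p\<in>UNIV. (v p)\<^sup>2 * exp (y p)) / 4"
      unfolding s_sq using sum_rest[of "\<lambda>p. (v p)\<^sup>2 * exp (y p) / 4"] vj by (simp add: sum_divide_distrib)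
    also have "(\<Sum>l\<in>-{j}. dd [axis l 1] \<Phi> z / \<sigma> l * (s l)\<^sup>2) = (\<Sum>l\<in>-{j}. dd [axis l 1] \<Phi> z * v l / 2 * s l)"
      using \<sigma>pos by (intro sum.cong refl) (simp add: s_def power2_eq_square field_simps del: dd.simps)
    finally show ?thesis .
  qed
  also have "(\<Sum>l\<in>-{j}. \<sigma> l * s l) = (\<Sum>p\<in>UNIV. v p * exp (y p)) / 2"
    unfolding \<sigma>s using sum_rest[of "\<lambda>p. v p * exp (y p) / 2"] vj by (simp add: sum_divide_distrib)
  finally have "(\<Sum>l\<in>-{j}. \<Sum>m\<in>-{j}. 4 * Re (H l m) * s l * s m) = log_potential_hessian a \<Phi> j y v"
    by (simp add: log_potential_hessian_def z_def S_def s_def \<sigma>_def power_divide algebra_simps)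
  moreover have "(\<Sum>l\<in>-{j}. \<Sum>m\<in>-{j}. 4 * Re (H l m) * s l * s m) =
      4 * Re (\<Sum>l\<in>-{j}. \<Sum>m\<in>-{j}. H l m * complex_of_real (s l) * cnj (complex_of_real (s m)))"
    by (simp add: Re_sum sum_distrib_left mult.assoc)
  moreover have "pos_def_herm H (-{j})"
    unfolding H_def using adm yj by (intro admissibleD) (simp_all add: z_def exp_coords_def)
  ultimately show ?thesis
    using pos_def_herm_nonneg[of H "-{j}" "\<lambda>p. complex_of_real (s p)"] by simp
qed

lemma has_real_derivative_dd_exp_coords_line:
  fixes \<Phi> :: "complex^'d::finite \<Rightarrow> real"
  assumes smooth: "smooth_on (- {0}) \<Phi>" and vs: "set vs \<subseteq> Basis" and xj: "x j = 0" and vj: "v j = 0"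
  shows "((\<lambda>t. dd vs \<Phi> (exp_coords (\<lambda>p. x p + t * v p))) has_real_derivative
           (\<Sum>l\<in>-{j}. dd (axis l 1 # vs) \<Phi> (exp_coords (\<lambda>p. x p + t * v p)) * (v l / 2 * exp ((x l + t * v l) / 2))))
         (at t)"
proof -
  define \<sigma> where "\<sigma> p t = exp ((x p + t * v p) / 2)" for p t
  have c: "exp_coords (\<lambda>p. x p + t * v p) = coord_curve (-{j}) (axis j 1) \<sigma> t" for t
    using xj vj by (auto simp: vec_eq_iff coord_curve_def exp_coords_def axis_def \<sigma>_def)
  have "(\<sigma> p has_real_derivative v p / 2 * \<sigma> p t) (at t)" for p
    unfolding \<sigma>_def by (auto intro!: derivative_eq_intros simp: algebra_simps)
  moreover have "coord_curve (-{j}) (axis j 1) \<sigma> t \<noteq> 0"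
    using exp_coords_nonzero[of "\<lambda>p. x p + t * v p"] unfolding c .
  ultimately have "((\<lambda>t. dd vs \<Phi> (coord_curve (-{j}) (axis j 1) \<sigma> t)) has_real_derivative
      (\<Sum>l\<in>-{j}. dd (axis l 1 # vs) \<Phi> (coord_curve (-{j}) (axis j 1) \<sigma> t) * (v l / 2 * \<sigma> l t))) (at t)"
    by (intro has_real_derivative_dd_coord_curve[OF smooth vs]) auto
  then show ?thesis unfolding c \<sigma>_def .
qed

lemma has_real_derivative_log_potential_line:
  fixes \<Phi> :: "complex^'d::finite \<Rightarrow> real"
  assumes smooth: "smooth_on (- {0}) \<Phi>" and xj: "x j = 0" and vj: "v j = 0"
  shows "((\<lambda>t. log_potential a \<Phi> (\<lambda>p. x p + t * v p)) has_real_derivative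
           log_potential_slope a \<Phi> j (\<lambda>p. x p + t * v p) v) (at t)"
  unfolding log_potential_def log_potential_slope_def
  using has_real_derivative_ln_sum_exp(1) has_real_derivative_dd_exp_coords_line[where x = x and v = v and j = j, OF smooth _ xj vj, of "[]"]
  by (intro DERIV_add DERIV_cmult) (simp_all del: dd.simps(2))

lemma has_real_derivative_log_potential_slope:
  fixes \<Phi> :: "complex^'d::finite \<Rightarrow> real"
  assumes smooth: "smooth_on (- {0}) \<Phi>" and xj: "x j = 0" and vj: "v j = 0"
  shows "((\<lambda>t. log_potential_slope a \<Phi> j (\<lambda>p. x p + t * v p) v) has_real_derivative
           log_potential_hessian a \<Phi> j (\<lambda>p. x p + t * v p) v) (at t)"
proof -
  define s where "s p t = v p / 2 * exp ((x p + t * v p) / 2)" for p t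
  define D1 where "D1 m t = dd [axis m 1] \<Phi> (exp_coords (\<lambda>p. x p + t * v p))" for m t
  define D2 where "D2 l m t = dd [axis l 1, axis m 1] \<Phi> (exp_coords (\<lambda>p. x p + t * v p))" for l m t
  have ds: "((\<lambda>t. s m t) has_real_derivative v m / 2 * s m t) (at t)" for m
    unfolding s_def by (auto intro!: derivative_eq_intros simp: algebra_simps)
  have dD1: "((\<lambda>t. D1 m t) has_real_derivative (\<Sum>l\<in>-{j}. D2 l m t * s l t)) (at t)" for m
    using has_real_derivative_dd_exp_coords_line[where x = x and v = v and j = j, OF smooth _ xj vj, of "[axis m 1]"]
    by (simp add: D1_def D2_def s_def del: dd.simps)
  have "((\<lambda>t. log_potential_slope a \<Phi> j (\<lambda>p. x p + t * v p) v) has_real_derivative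
      a * ((\<Sum>p\<in>UNIV. (v p)\<^sup>2 * exp (x p + t * v p)) / (\<Sum>p\<in>UNIV. exp (x p + t * v p))
          - (\<Sum>p\<in>UNIV. v p * exp (x p + t * v p))\<^sup>2 / (\<Sum>p\<in>UNIV. exp (x p + t * v p))\<^sup>2)
      + (\<Sum>m\<in>-{j}. (\<Sum>l\<in>-{j}. D2 l m t * s l t) * s m t + v m / 2 * s m t * D1 m t)) (at t)"
    unfolding log_potential_slope_def D1_def[symmetric] s_def[symmetric]
    using has_real_derivative_ln_sum_exp(2) dD1 ds by (intro DERIV_add DERIV_cmult DERIV_sum DERIV_mult)
  moreover have "(\<Sum>m\<in>-{j}. (\<Sum>l\<in>-{j}. D2 l m t * s l t) * s m t) = (\<Sum>l\<in>-{j}. \<Sum>m\<in>-{j}. D2 l m t * s l t * s m t)"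
    by (subst sum.swap) (simp add: sum_distrib_right)
  ultimately show ?thesis
    by (simp add: log_potential_hessian_def D1_def D2_def s_def sum.distrib algebra_simps del: dd.simps)
qed

lemma convex_on_log_potential_chart_line:
  fixes \<Phi> :: "complex^'d::finite \<Rightarrow> real"
  assumes smooth: "smooth_on (- {0}) \<Phi>" and phase: "phase_invariant \<Phi>" and adm: "admissible a \<Phi>"
    and xj: "x j = 0" and vj: "v j = 0"
  shows "convex_on UNIV (\<lambda>t. log_potential a \<Phi> (\<lambda>p. x p + t * v p))"
proof (rule f''_ge0_imp_convex)
  show "((\<lambda>t. log_potential a \<Phi> (\<lambda>p. x p + t * v p)) has_real_derivative
      log_potential_slope a \<Phi> j (\<lambda>p. x p + t * v p) v) (at t)" for t
    using smooth xj vj by (rule has_real_derivative_log_potential_line)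
  show "((\<lambda>t. log_potential_slope a \<Phi> j (\<lambda>p. x p + t * v p) v) has_real_derivative
      log_potential_hessian a \<Phi> j (\<lambda>p. x p + t * v p) v) (at t)" for t
    using smooth xj vj by (rule has_real_derivative_log_potential_slope)
  show "0 \<le> log_potential_hessian a \<Phi> j (\<lambda>p. x p + t * v p) v" for t
    using xj vj by (intro log_potential_hessian_nonneg[OF smooth phase adm]) simp_all
qed simp

lemma convex_on_log_potential_line:
  fixes \<Phi> :: "complex^'d::finite \<Rightarrow> real"
  assumes smooth: "smooth_on (- {0}) \<Phi>" and phase: "phase_invariant \<Phi>" and adm: "admissible a \<Phi>"
    and proj: "proj_fun \<Phi>"
  shows "convex_on UNIV (\<lambda>t. log_potential a \<Phi> (\<lambda>p. x p + t * v p))"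
proof -
  text \<open>Any coordinate \<open>j\<close> serves as a chart: shifting the line into \<open>{x j = v j = 0}\<close> only adds
    the affine term \<open>a (x j + t v j)\<close>.\<close>
  fix j :: 'd
  define x' where "x' p = x p - x j" for p
  define v' where "v' p = v p - v j" for p
  have "log_potential a \<Phi> (\<lambda>p. x p + t * v p) = log_potential a \<Phi> (\<lambda>p. x' p + t * v' p) + a * (x j + t * v j)" for t
  proof -
    have "(\<lambda>p. x p + t * v p) = (\<lambda>p. (x' p + t * v' p) + (x j + t * v j))"
      by (auto simp: x'_def v'_def algebra_simps)
    then show ?thesis using log_potential_add_const[OF proj] by metis
  qed
  moreover have "convex_on UNIV (\<lambda>t. log_potential a \<Phi> (\<lambda>p. x' p + t * v' p))"
    by (rule convex_on_log_potential_chart_line[OF smooth phase adm]) (simp_all add: x'_def v'_def)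
  moreover have "convex_on UNIV (\<lambda>t. a * (x j + t * v j))"
    by (rule convex_onI) (auto simp: algebra_simps)
  ultimately show ?thesis by (simp add: convex_on_add)
qed

lemma log_potential_convex:
  fixes \<Phi> :: "complex^'d::finite \<Rightarrow> real"
  assumes "smooth_on (- {0}) \<Phi>" "phase_invariant \<Phi>" "admissible a \<Phi>" "proj_fun \<Phi>"
    and "0 \<le> l" "l \<le> 1"
  shows "log_potential a \<Phi> (\<lambda>p. (1 - l) * x p + l * y p) \<le> (1 - l) * log_potential a \<Phi> x + l * log_potential a \<Phi> y"
  using convex_onD[OF convex_on_log_potential_line[OF assms(1-4), of x "\<lambda>p. y p - x p"] assms(5,6), of 0 1]
  by (simp add: algebra_simps)

lemma convex_on_bdd_above_at_bot_mono:
  fixes f :: "real \<Rightarrow> real"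
  assumes f: "convex_on UNIV f" and bdd: "\<And>t. t \<le> 0 \<Longrightarrow> f t \<le> B" and "s \<le> t"
  shows "f s \<le> f t"
proof (rule ccontr)
  assume "\<not> f s \<le> f t"
  define D where "D = f s - f t"
  have "D > 0" using \<open>\<not> f s \<le> f t\<close> by (simp add: D_def)
  have "s < t" using \<open>\<not> f s \<le> f t\<close> \<open>s \<le> t\<close> by (cases "s = t") auto
  define r where "r = min 0 s - \<bar>B - f s\<bar> * (t - s) / D - 1"
  have "\<bar>B - f s\<bar> * (t - s) / D \<ge> 0" using \<open>D > 0\<close> \<open>s < t\<close> by simp
  then have "r < s" "r \<le> 0" by (auto simp: r_def)
  text \<open>Slopes of a convex function increase; the slope on \<open>[r, s]\<close> is at least \<open>(f s - B) / (s - r)\<close>,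
    which tends to \<open>0\<close> as \<open>r \<rightarrow> -\<infinity>\<close>, while the slope on \<open>[s, t]\<close> is the negative \<open>-D / (t - s)\<close>.\<close>
  have "(f r - f s) / (r - s) \<le> (f s - f t) / (s - t)"
    using convex_on_slope_le[OF f _ _ \<open>r < s\<close> \<open>s < t\<close>] by simp
  then have "(f s - f r) * (t - s) \<le> - D * (s - r)"
    using \<open>r < s\<close> \<open>s < t\<close> by (simp add: D_def field_simps)
  moreover have "(f s - f r) * (t - s) \<ge> - \<bar>B - f s\<bar> * (t - s)"
    using bdd[OF \<open>r \<le> 0\<close>] \<open>s < t\<close> by (intro mult_right_mono) auto
  moreover have "D * (s - r) > \<bar>B - f s\<bar> * (t - s)"
  proof -
    have "s - r \<ge> \<bar>B - f s\<bar> * (t - s) / D + 1" by (simp add: r_def)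
    then have "D * (s - r) \<ge> \<bar>B - f s\<bar> * (t - s) + D"
      using \<open>D > 0\<close> by (simp add: field_simps)
    then show ?thesis using \<open>D > 0\<close> by linarith
  qed
  ultimately show False by linarith
qed

section \<open>Averaging over permutations\<close>

lemma swp_swp [simp]: "swp i j (swp i j k) = k"
  by (auto simp: swp_def)

lemma sum_reindex_swp: "(\<Sum>k\<in>UNIV. f (swp i j k)) = (\<Sum>k\<in>UNIV. f k)"
  by (rule sum.reindex_bij_witness[of _ "swp i j" "swp i j"]) auto

lemma convex_swap_invariant_average_step:
  fixes V :: "('i::finite \<Rightarrow> real) \<Rightarrow> real"
  assumes cvx: "\<And>x y l. 0 \<le> l \<Longrightarrow> l \<le> 1 \<Longrightarrow> V (\<lambda>k. (1 - l) * x k + l * y k) \<le> (1 - l) * V x + l * V y"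
    and sw: "\<And>x i j. V (\<lambda>k. x (swp i j k)) = V x"
    and i: "x i > \<mu>" and j: "x j < \<mu>"
  obtains y where "V y \<le> V x" "(\<Sum>k\<in>UNIV. y k) = (\<Sum>k\<in>UNIV. x k)" "{k. y k \<noteq> \<mu>} \<subset> {k. x k \<noteq> \<mu>}"
proof
  define l where "l = (x i - \<mu>) / (x i - x j)"
  have l: "0 \<le> l" "l \<le> 1" using i j by (auto simp: l_def field_simps)
  define y where "y k = (1 - l) * x k + l * x (swp i j k)" for k
  have "V y \<le> (1 - l) * V x + l * V (\<lambda>k. x (swp i j k))"
    unfolding y_def by (rule cvx[OF l])
  then show "V y \<le> V x" by (simp add: sw algebra_simps)
  have "(\<Sum>k\<in>UNIV. y k) = (1 - l) * (\<Sum>k\<in>UNIV. x k) + l * (\<Sum>k\<in>UNIV. x (swp i j k))"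
    unfolding y_def by (simp add: sum.distrib sum_distrib_left)
  then show "(\<Sum>k\<in>UNIV. y k) = (\<Sum>k\<in>UNIV. x k)"
    unfolding sum_reindex_swp by (simp add: algebra_simps)
  have "y i = x i - l * (x i - x j)" by (simp add: y_def swp_def algebra_simps)
  also have "l * (x i - x j) = x i - \<mu>" using i j by (simp add: l_def)
  finally have "y i = \<mu>" by simp
  moreover have "y k = x k" if "k \<noteq> i" "k \<noteq> j" for k
    using that by (simp add: y_def swp_def algebra_simps)
  ultimately have "{k. y k \<noteq> \<mu>} \<subseteq> {k. x k \<noteq> \<mu>} - {i}"
    using j by fastforce
  then show "{k. y k \<noteq> \<mu>} \<subset> {k. x k \<noteq> \<mu>}" using i by auto
qed

text \<open>Averaging along transpositions, each step fixing one more coordinate at the mean.\<close>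
lemma convex_swap_invariant_mean_le:
  fixes V :: "('i::finite \<Rightarrow> real) \<Rightarrow> real"
  assumes cvx: "\<And>x y l. 0 \<le> l \<Longrightarrow> l \<le> 1 \<Longrightarrow> V (\<lambda>k. (1 - l) * x k + l * y k) \<le> (1 - l) * V x + l * V y"
    and sw: "\<And>x i j. V (\<lambda>k. x (swp i j k)) = V x"
  shows "V (\<lambda>k. (\<Sum>q\<in>UNIV. x q) / real CARD('i)) \<le> V x"
proof -
  define \<mu> where "\<mu> = (\<Sum>q\<in>UNIV. x q) / real CARD('i)"
  have "V (\<lambda>k. \<mu>) \<le> V x" if "(\<Sum>q\<in>UNIV. x q) = real CARD('i) * \<mu>" for x
    using that
  proof (induction "card {k. x k \<noteq> \<mu>}" arbitrary: x rule: less_induct)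
    case less
    show ?case
    proof (cases "\<forall>k. x k = \<mu>")
      case True
      then have "x = (\<lambda>k. \<mu>)" by auto
      then show ?thesis by simp
    next
      case False
      have sum0: "(\<Sum>q\<in>UNIV. x q - \<mu>) = 0" using less.prems by (simp add: sum_subtractf)
      have "\<exists>i. x i > \<mu>"
      proof (rule ccontr)
        assume "\<nexists>i. x i > \<mu>"
        then have "\<forall>q\<in>UNIV. \<mu> - x q = 0"
          using sum0 by (subst sum_nonneg_eq_0_iff[symmetric]) (auto simp: sum_subtractf not_less)
        then show False using False by auto
      qed
      moreover have "\<exists>j. x j < \<mu>"
      proof (rule ccontr)
        assume "\<nexists>j. x j < \<mu>"
        then have "\<forall>q\<in>UNIV. x q - \<mu> = 0"
          using sum0 by (subst sum_nonneg_eq_0_iff[symmetric]) (auto simp: not_less)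
        then show False using False by auto
      qed
      ultimately obtain y where y: "V y \<le> V x" "(\<Sum>k\<in>UNIV. y k) = (\<Sum>k\<in>UNIV. x k)"
          "{k. y k \<noteq> \<mu>} \<subset> {k. x k \<noteq> \<mu>}"
        using convex_swap_invariant_average_step[OF cvx sw] by metis
      have "card {k. y k \<noteq> \<mu>} < card {k. x k \<noteq> \<mu>}"
        using y(3) by (intro psubset_card_mono) auto
      then have "V (\<lambda>k. \<mu>) \<le> V y" using less.hyps y(2) less.prems by simp
      then show ?thesis using y(1) by simp
    qed
  qed
  then show ?thesis unfolding \<mu>_def[symmetric] by (simp add: \<mu>_def)
qed

lemma log_potential_permute:
  assumes "bij \<pi>" and "\<Phi> (exp_coords (\<lambda>q. x (\<pi> q))) = \<Phi> (exp_coords x)"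
  shows "log_potential a \<Phi> (\<lambda>q. x (\<pi> q)) = log_potential a \<Phi> x"
proof -
  have "(\<Sum>q\<in>UNIV. exp (x (\<pi> q))) = (\<Sum>q\<in>UNIV. exp (x q))"
    using assms(1) by (rule sum.reindex_bij_betw)
  then show ?thesis using assms(2) by (simp add: log_potential_def)
qed

definition update_block :: "'b \<Rightarrow> ('c \<Rightarrow> real) \<Rightarrow> ('b \<times> 'c \<Rightarrow> real) \<Rightarrow> 'b \<times> 'c \<Rightarrow> real" where
  "update_block h y x = (\<lambda>q. if fst q = h then y (snd q) else x q)"

definition block_mean :: "('b \<times> 'c::finite \<Rightarrow> real) \<Rightarrow> 'b \<Rightarrow> real" where
  "block_mean x h = (\<Sum>c\<in>UNIV. x (h, c)) / real CARD('c)"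

locale invariant_potential =
  fixes a :: real and \<Phi> :: "complex^('b::finite \<times> 'c::finite) \<Rightarrow> real"
  assumes smooth: "smooth_on (- {0}) \<Phi>" and adm: "admissible a \<Phi>" and proj: "proj_fun \<Phi>"
    and inv: "G_invariant \<Phi>"
begin

lemma phase_invariant_Phi: "phase_invariant \<Phi>"
  using inv by (rule G_invariant_imp_phase_invariant)

lemma log_potential_convex_comb:
  "0 \<le> l \<Longrightarrow> l \<le> 1 \<Longrightarrow>
    log_potential a \<Phi> (\<lambda>p. (1 - l) * x p + l * y p) \<le> (1 - l) * log_potential a \<Phi> x + l * log_potential a \<Phi> y"
  by (rule log_potential_convex[OF smooth phase_invariant_Phi adm proj])

lemma log_potential_block_average_le:
  "log_potential a \<Phi> (update_block h (\<lambda>_. block_mean x h) x) \<le> log_potential a \<Phi> x"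
proof -
  define V where "V y = log_potential a \<Phi> (update_block h y x)" for y
  have "V (\<lambda>_. (\<Sum>c\<in>UNIV. x (h, c)) / real CARD('c)) \<le> V (\<lambda>c. x (h, c))"
  proof (rule convex_swap_invariant_mean_le)
    fix y1 y2 :: "'c \<Rightarrow> real" and l :: real assume "0 \<le> l" "l \<le> 1"
    have "update_block h (\<lambda>k. (1 - l) * y1 k + l * y2 k) x =
        (\<lambda>q. (1 - l) * update_block h y1 x q + l * update_block h y2 x q)"
      by (auto simp: update_block_def algebra_simps)
    then show "V (\<lambda>k. (1 - l) * y1 k + l * y2 k) \<le> (1 - l) * V y1 + l * V y2"
      unfolding V_def using log_potential_convex_comb[OF \<open>0 \<le> l\<close> \<open>l \<le> 1\<close>] by simp
  next
    fix y :: "'c \<Rightarrow> real" and i j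
    define \<pi> where "\<pi> q = (if fst q = h then (h, swp i j (snd q)) else q)" for q :: "'b \<times> 'c"
    have "bij \<pi>" by (rule o_bij[of \<pi>]) (auto simp: \<pi>_def)
    have "(\<chi> q. if fst q = h then exp_coords (update_block h y x) $ (h, swp i j (snd q))
            else exp_coords (update_block h y x) $ q) = exp_coords (\<lambda>q. update_block h y x (\<pi> q))"
      by (auto simp: vec_eq_iff exp_coords_def \<pi>_def)
    moreover have "\<Phi> (\<chi> q. if fst q = h then exp_coords (update_block h y x) $ (h, swp i j (snd q))
            else exp_coords (update_block h y x) $ q) = \<Phi> (exp_coords (update_block h y x))"
      using inv unfolding G_invariant_def by blast
    moreover have "update_block h (\<lambda>k. y (swp i j k)) x = (\<lambda>q. update_block h y x (\<pi> q))"
      by (auto simp: update_block_def \<pi>_def)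
    ultimately show "V (\<lambda>k. y (swp i j k)) = V y"
      unfolding V_def using log_potential_permute[OF \<open>bij \<pi>\<close>] by simp
  qed
  moreover have "update_block h (\<lambda>c. x (h, c)) x = x" by (auto simp: update_block_def)
  ultimately show ?thesis by (simp add: V_def block_mean_def)
qed

lemma log_potential_block_means_le: "log_potential a \<Phi> (\<lambda>q. block_mean x (fst q)) \<le> log_potential a \<Phi> x"
proof -
  define x' where "x' B = (\<lambda>q. if fst q \<in> B then block_mean x (fst q) else x q)" for B
  have "log_potential a \<Phi> (x' B) \<le> log_potential a \<Phi> x" if "finite B" for B
    using that
  proof (induction B rule: finite_induct)
    case (insert h B)
    have "x' (insert h B) = update_block h (\<lambda>_. block_mean (x' B) h) (x' B)"
      using insert(2) by (auto simp: x'_def update_block_def block_mean_def)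
    then show ?case using log_potential_block_average_le[of h "x' B"] insert(3) by simp
  qed (simp add: x'_def)
  from this[of UNIV] show ?thesis by (simp add: x'_def)
qed

lemma log_potential_mean_le:
  "log_potential a \<Phi> (\<lambda>q. (\<Sum>p\<in>UNIV. x p) / real CARD('b \<times> 'c)) \<le> log_potential a \<Phi> x"
proof -
  define W where "W y = log_potential a \<Phi> (\<lambda>q. y (fst q))" for y :: "'b \<Rightarrow> real"
  have "W (\<lambda>_. (\<Sum>h\<in>UNIV. block_mean x h) / real CARD('b)) \<le> W (block_mean x)"
  proof (rule convex_swap_invariant_mean_le)
    fix y1 y2 :: "'b \<Rightarrow> real" and l :: real assume "0 \<le> l" "l \<le> 1"
    then show "W (\<lambda>k. (1 - l) * y1 k + l * y2 k) \<le> (1 - l) * W y1 + l * W y2"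
      unfolding W_def by (rule log_potential_convex_comb)
  next
    fix y :: "'b \<Rightarrow> real" and i j
    define \<pi> where "\<pi> q = (swp i j (fst q), snd q)" for q :: "'b \<times> 'c"
    have "bij \<pi>" by (rule o_bij[of \<pi>]) (auto simp: \<pi>_def)
    have "(\<chi> q. exp_coords (\<lambda>q. y (fst q)) $ (swp i j (fst q), snd q)) = exp_coords (\<lambda>q. y (fst (\<pi> q)))"
      by (auto simp: vec_eq_iff exp_coords_def \<pi>_def)
    moreover have "\<Phi> (\<chi> q. exp_coords (\<lambda>q. y (fst q)) $ (swp i j (fst q), snd q)) = \<Phi> (exp_coords (\<lambda>q. y (fst q)))"
      using inv unfolding G_invariant_def by blast
    ultimately have "\<Phi> (exp_coords (\<lambda>q. y (fst (\<pi> q)))) = \<Phi> (exp_coords (\<lambda>q. y (fst q)))"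
      by simp
    from log_potential_permute[OF \<open>bij \<pi>\<close> this]
    show "W (\<lambda>k. y (swp i j k)) = W y" unfolding W_def by (simp add: \<pi>_def)
  qed
  moreover have "(\<Sum>h\<in>UNIV. block_mean x h) / real CARD('b) = (\<Sum>p\<in>UNIV. x p) / real CARD('b \<times> 'c)"
  proof -
    have "(\<Sum>p\<in>UNIV. x p) = (\<Sum>h\<in>UNIV. \<Sum>c\<in>UNIV. x (h, c))"
      by (simp add: sum.cartesian_product UNIV_Times_UNIV[symmetric] del: UNIV_Times_UNIV)
    then show ?thesis by (simp add: block_mean_def sum_divide_distrib[symmetric] field_simps)
  qed
  ultimately show ?thesis
    using log_potential_block_means_le[of x] by (simp add: W_def)
qed

end

section \<open>Monotonicity and the lower bound\<close>

lemma proj_fun_bdd_above: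
  fixes \<Phi> :: "complex^'d::finite \<Rightarrow> real"
  assumes proj: "proj_fun \<Phi>" and cont: "continuous_on (- {0}) \<Phi>"
  shows "bdd_above (\<Phi> ` (- {0}))"
proof -
  have "compact (\<Phi> ` sphere 0 1)"
    by (rule compact_continuous_image[OF continuous_on_subset[OF cont] compact_sphere]) auto
  then obtain B where B: "\<And>w. w \<in> sphere 0 1 \<Longrightarrow> \<Phi> w \<le> B"
    using compact_imp_bounded bounded_imp_bdd_above unfolding bdd_above_def by (metis imageI)
  have "\<Phi> z \<le> B" if "z \<noteq> 0" for z
  proof -
    have "(1 / norm z) *\<^sub>R z = complex_of_real (1 / norm z) *s z"
      unfolding vec_eq_iff by (simp add: scaleR_conv_of_real[where 'a = complex])
    then have "\<Phi> z = \<Phi> ((1 / norm z) *\<^sub>R z)" using proj_funD[OF proj that] that by simp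
    then show ?thesis using B[of "(1 / norm z) *\<^sub>R z"] that by simp
  qed
  then show ?thesis by (intro bdd_aboveI2) auto
qed

locale normalized_invariant_potential = invariant_potential a \<Phi>
  for a and \<Phi> :: "complex^('b::finite \<times> 'c::finite) \<Rightarrow> real" +
  assumes a_pos: "0 < a" and sup_zero: "(SUP z\<in>- {0}. \<Phi> z) = 0"
begin

lemma continuous_Phi: "continuous_on (- {0}) \<Phi>"
  using smooth_on_continuous_dd[OF smooth, of "[]"] by simp

lemma bdd_above_Phi: "bdd_above (\<Phi> ` (- {0}))"
  using proj continuous_Phi by (rule proj_fun_bdd_above)

lemma Phi_exp_coords_le_zero: "\<Phi> (exp_coords x) \<le> 0"
  using cSUP_upper[of "exp_coords x" "- {0}" \<Phi>] bdd_above_Phi sup_zero exp_coords_nonzero by auto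

text \<open>By phase invariance and continuity the supremum is approached at the positive real points
  \<open>|z\<^sub>p| + \<eta>\<close>.\<close>
lemma exists_Phi_exp_coords_gt:
  assumes "\<epsilon> > 0"
  shows "\<exists>x. \<Phi> (exp_coords x) > - \<epsilon>"
proof -
  obtain z where z: "z \<noteq> 0" "\<Phi> z > - \<epsilon>"
    using less_cSUP_iff[OF _ bdd_above_Phi, of "- \<epsilon>"] sup_zero assms by auto
  define w where "w = (\<chi> p. complex_of_real (cmod (z $ p)))"
  define e :: "complex^('b \<times> 'c)" where "e = (\<chi> p. 1)"
  have "\<Phi> w > - \<epsilon>" using phase_invariant_abs_coords[OF phase_invariant_Phi, of z] z w_def by simp
  have "w \<noteq> 0" using z(1) by (auto simp: w_def vec_eq_iff)
  then have "isCont \<Phi> w" using continuous_Phi continuous_on_eq_continuous_at[of "- {0}" \<Phi>] by auto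
  moreover have "((\<lambda>\<eta>. w + \<eta> *\<^sub>R e) \<longlongrightarrow> w) (at_right 0)"
    by (auto intro!: tendsto_eq_intros)
  ultimately have "((\<lambda>\<eta>. \<Phi> (w + \<eta> *\<^sub>R e)) \<longlongrightarrow> \<Phi> w) (at_right 0)"
    by (rule isCont_tendsto_compose)
  from order_tendstoD(1)[OF this \<open>\<Phi> w > - \<epsilon>\<close>]
  have "\<forall>\<^sub>F \<eta> in at_right 0. \<Phi> (w + \<eta> *\<^sub>R e) > - \<epsilon> \<and> \<eta> > 0"
    using eventually_at_right_less[of 0] by (rule eventually_conj)
  then obtain \<eta> :: real where "\<Phi> (w + \<eta> *\<^sub>R e) > - \<epsilon>" "\<eta> > 0"
    using eventually_happens trivial_limit_at_right_real by blast
  moreover have "w + \<eta> *\<^sub>R e = exp_coords (\<lambda>p. 2 * ln (cmod (z $ p) + \<eta>))"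
  proof -
    have "(w + \<eta> *\<^sub>R e) $ p = complex_of_real (cmod (z $ p) + \<eta>)" for p
      unfolding vector_add_component vector_scaleR_component w_def e_def vec_lambda_beta
      by (simp add: scaleR_conv_of_real)
    then show ?thesis using \<open>\<eta> > 0\<close> by (simp add: vec_eq_iff exp_coords_def add_nonneg_pos)
  qed
  ultimately show ?thesis by metis
qed

lemma log_potential_mono_coord:
  assumes "t \<le> t'"
  shows "log_potential a \<Phi> (\<lambda>q. x q + t * (if q = p then 1 else 0))
           \<le> log_potential a \<Phi> (\<lambda>q. x q + t' * (if q = p then 1 else 0))"
proof (rule convex_on_bdd_above_at_bot_mono[OF convex_on_log_potential_line[OF smooth phase_invariant_Phi adm proj] _ assms])
  fix s :: real assume "s \<le> 0"
  then have "(\<Sum>q\<in>UNIV. exp (x q + s * (if q = p then 1 else 0))) \<le> (\<Sum>q\<in>UNIV. exp (x q))"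
    by (intro sum_mono) auto
  moreover have "(\<Sum>q\<in>UNIV. exp (x q + s * (if q = p then 1 else 0))) > 0" by (intro sum_pos) auto
  ultimately have "a * ln (\<Sum>q\<in>UNIV. exp (x q + s * (if q = p then 1 else 0))) \<le> a * ln (\<Sum>q\<in>UNIV. exp (x q))"
    using a_pos by (intro mult_left_mono) auto
  moreover have "\<Phi> (exp_coords (\<lambda>q. x q + s * (if q = p then 1 else 0))) \<le> 0"
    by (rule Phi_exp_coords_le_zero)
  ultimately show "log_potential a \<Phi> (\<lambda>q. x q + s * (if q = p then 1 else 0)) \<le> a * ln (\<Sum>q\<in>UNIV. exp (x q))"
    unfolding log_potential_def by linarith
qed

lemma log_potential_mono:
  assumes "\<And>q. x q \<le> y q"
  shows "log_potential a \<Phi> x \<le> log_potential a \<Phi> y"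
proof -
  define z where "z Q = (\<lambda>q. if q \<in> Q then y q else x q)" for Q
  have "log_potential a \<Phi> x \<le> log_potential a \<Phi> (z Q)" if "finite Q" for Q
    using that
  proof (induction Q rule: finite_induct)
    case (insert p Q)
    have "z (insert p Q) = (\<lambda>q. z Q q + (y p - x p) * (if q = p then 1 else 0))"
      using insert(2) by (auto simp: z_def)
    moreover have "z Q = (\<lambda>q. z Q q + 0 * (if q = p then 1 else 0))" by simp
    ultimately have "log_potential a \<Phi> (z Q) \<le> log_potential a \<Phi> (z (insert p Q))"
      using log_potential_mono_coord[of 0 "y p - x p" "z Q" p] assms[of p] by simp
    then show ?case using insert(3) by simp
  qed (simp add: z_def)
  from this[of UNIV] show ?thesis by (simp add: z_def)
qed

lemma Phi_exp_coords_le_log_potential_zero: "\<Phi> (exp_coords x) \<le> log_potential a \<Phi> (\<lambda>_. 0)"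
proof -
  define M where "M = Max (range x)"
  have "M \<in> range x" unfolding M_def by (intro Max_in) auto
  then obtain p where "x p = M" by blast
  have "log_potential a \<Phi> x \<le> log_potential a \<Phi> (\<lambda>_. 0 + M)"
    unfolding M_def by (intro log_potential_mono) simp
  also have "\<dots> = log_potential a \<Phi> (\<lambda>_. 0) + a * M" by (rule log_potential_add_const[OF proj])
  finally have "log_potential a \<Phi> x \<le> log_potential a \<Phi> (\<lambda>_. 0) + a * M" .
  moreover have "exp M \<le> (\<Sum>q\<in>UNIV. exp (x q))"
    using \<open>x p = M\<close> member_le_sum[of p UNIV "\<lambda>q. exp (x q)"] by auto
  then have "M \<le> ln (\<Sum>q\<in>UNIV. exp (x q))"
    by (metis exp_gt_zero ln_exp ln_le_cancel_iff order_less_le_trans)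
  then have "a * M \<le> a * ln (\<Sum>q\<in>UNIV. exp (x q))"
    using a_pos by (intro mult_left_mono) auto
  ultimately show ?thesis unfolding log_potential_def by linarith
qed

lemma log_potential_zero_nonneg: "0 \<le> log_potential a \<Phi> (\<lambda>_. 0)"
proof (rule ccontr)
  assume "\<not> 0 \<le> log_potential a \<Phi> (\<lambda>_. 0)"
  then obtain x where "\<Phi> (exp_coords x) > log_potential a \<Phi> (\<lambda>_. 0)"
    using exists_Phi_exp_coords_gt[of "- log_potential a \<Phi> (\<lambda>_. 0)"] by auto
  then show False using Phi_exp_coords_le_log_potential_zero[of x] by simp
qed

lemma psi_le_Phi:
  assumes "\<And>p. z $ p \<noteq> 0"
  shows "psi a z \<le> \<Phi> z"
proof -
  define x where "x p = 2 * ln (cmod (z $ p))" for p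
  define S where "S = (\<Sum>p\<in>UNIV. exp (x p))"
  define m where "m = (\<Sum>p\<in>UNIV. x p) / real CARD('b \<times> 'c)"
  have ex: "exp (x p / 2) = cmod (z $ p)" for p using assms[of p] by (simp add: x_def)
  have "S > 0" unfolding S_def by (intro sum_pos) auto
  have "\<Phi> z = \<Phi> (exp_coords x)"
    using phase_invariant_abs_coords[OF phase_invariant_Phi, of z] by (simp add: exp_coords_def ex)
  have "log_potential a \<Phi> (\<lambda>_. 0) + a * m \<le> log_potential a \<Phi> x"
    using log_potential_mean_le[of x] log_potential_add_const[OF proj, where x = "\<lambda>_. 0" and s = m] by (simp add: m_def)
  then have "a * m - a * ln S \<le> \<Phi> z"
    using log_potential_zero_nonneg \<open>\<Phi> z = \<Phi> (exp_coords x)\<close> unfolding log_potential_def S_def by linarith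
  moreover have "psi a z = a * m - a * ln S"
  proof -
    have P: "(\<Prod>p\<in>UNIV. cmod (z $ p)) = exp ((\<Sum>p\<in>UNIV. x p) / 2)"
      by (simp add: ex[symmetric] exp_sum sum_divide_distrib)
    have S: "(\<Sum>p\<in>UNIV. (cmod (z $ p))\<^sup>2) = S"
      unfolding S_def by (intro sum.cong refl) (simp add: ex[symmetric] power2_eq_square exp_add[symmetric])
    have "psi a z = ln (exp ((\<Sum>p\<in>UNIV. x p) / 2) powr (2 * a / real CARD('b \<times> 'c)) / S powr a)"
      unfolding psi_def P S ..
    also have "\<dots> = ln (exp ((\<Sum>p\<in>UNIV. x p) / 2) powr (2 * a / real CARD('b \<times> 'c))) - ln (S powr a)"
      using \<open>S > 0\<close> by (intro ln_divide_pos) auto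
    also have "\<dots> = a * m - a * ln S"
      using \<open>S > 0\<close> by (simp add: m_def field_simps)
    finally show ?thesis .
  qed
  ultimately show ?thesis by simp
qed

end

theorem theorem1:
  fixes a :: real
    and \<Phi> :: "complex^('b::finite \<times> 'c::finite) \<Rightarrow> real"
  assumes "0 < a"
    and "proj_fun \<Phi>"
    and "smooth_on (- {0}) \<Phi>"
    and "admissible a \<Phi>"
    and "G_invariant \<Phi>"
    and "(SUP z\<in>- {0}. \<Phi> z) = 0"
  shows "\<forall>z. (\<forall>p. z $ p \<noteq> 0) \<longrightarrow> psi a z \<le> \<Phi> z"
proof -
  interpret normalized_invariant_potential a \<Phi>
    using assms by unfold_locales
  show ?thesis using psi_le_Phi by blast
qed

end
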